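(* Let $n=2$ and let $(X,\mathbf h,\Lambda,\widetilde B)$ be a coprime quantum seed, with $X'_1,X'_2$ the corresponding cluster variables of $\mu_1(X,\mathbf h,\Lambda,\widetilde B)$ and $\mu_2(X,\mathbf h,\Lambda,\widetilde B)$. Then $$\mathbb{ZP}[X_1,X'_1,X_2,X'_2]=\mathbb{ZP}[X_1,X'_1,X_2^{\pm1}]\cap\mathbb{ZP}[X_1^{\pm1},X_2,X'_2].$$
   Context: Notation: $[a,b]=\{a,a+1,\dots,b\}$; $[x]_+=\max(x,0)$, applied entrywise to vectors; $e_1,\dots,e_m$ is the standard basis of $\mathbb Z^m$. Fix integers $m\ge n\ge 1$. A compatible pair $(\Lambda,\widetilde B)$ consists of an $m\times n$ integer matrix $\widetilde B=(b_{kl})$ and a skew-symmetric $m\times m$ integer matrix $\Lambda$ such that $\Lambda\widetilde B=-\begin{bmatrix}D\\0\end{bmatrix}$ for some $D=\mathrm{diag}(\tilde d_1,\dots,\tilde d_n)$ with all $\tilde d_k\in\mathbb Z_{>0}$. Write $\Lambda(a,b)=a^T\Lambda b$. Fix positive integers $d_1,\dots,d_n$ such that $d_k$ divides every entry of the $k$-th column $b^k$ of $\widetilde B$; $\beta^k=\frac1{d_k}b^k$. The quantum torus $\mathcal T(\Lambda)$ is the $\mathbb Z[q^{\pm1/2}]$-algebra with basis $\{X(c)\mid c\in\mathbb Z^m\}$ and multiplication $X(c)X(d)=q^{\frac12\Lambda(c,d)}X(c+d)$; $\mathcal F$ is its skew field of fractions, $X_k=X(e_k)$. For $k\in[1,n]$,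 $\mathbf h_k=(h_{k,0},\dots,h_{k,d_k})$ with $h_{k,r}\in\mathbb Z[q^{\pm1/2}]$, $h_{k,r}=h_{k,d_k-r}$, $h_{k,0}=h_{k,d_k}=1$. A quantum seed $(X,\mathbf h,\Lambda,\widetilde B)$ consists of these data and the map $X:c\mapsto X(c)$. Its mutation in direction $i$ has cluster variables $X'_k=X_k$ for $k\ne i$ and $X'_i=\sum_{r=0}^{d_i}h_{i,r}X(r[\beta^i]_++(d_i-r)[-\beta^i]_+-e_i)$. $\mathbb{ZP}$ is the ring of Laurent polynomials in $X_{n+1},\dots,X_m$ with coefficients in $\mathbb Z[q^{\pm1/2}]$; for $Y_1,\dots,Y_s\in\mathcal F$, $\mathbb{ZP}[Y_1,\dots,Y_s]$ is the subring of $\mathcal F$ generated by $\mathbb{ZP}$ and the $Y_k$ (exponent $\pm1$ means both $Y$ and $Y^{-1}$ are adjoined). For $i\neq j$, the elements $X_iX'_i$ and $X_jX'_j$ (where $X'_k$ denotes the $k$-th cluster variable of $\mu_k$ of the seed) are coprime if there is no non-invertible element $c$ of the center of $\mathbb{ZP}[X_1,\dots,X_n]$ dividing both. A quantum seed is coprime if $X_iX'_i$ and $X_jX'_j$ are coprime for all $i\neq j\in[1,n]$. *)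

theory Defs
  imports "HOL-Algebra.Generated_Rings"
begin

text \<open>Indices of Z^m run over 1..m; a vector of Z^m is a function
  nat => int vanishing outside 1..m. Matrices are functions nat => nat => int
  (entry (i,j) is M i j), only entries with indices in range matter.
  We write t = q^(1/2). The quantum torus T(Lambda) has Z-basis t^k X(c)
  (k in Z, c in Z^m); an element is a finitely supported function from
  keys (c,k) to Z.  Multiplication: (t^k X(c)) (t^l X(d)) = t^(k+l+Lambda(c,d)) X(c+d),
  i.e. X(c)X(d) = q^(Lambda(c,d)/2) X(c+d).\<close>

type_synonym zvec = "nat \<Rightarrow> int"
type_synonym qkey = "zvec \<times> int"
type_synonym qt = "qkey \<Rightarrow> int"

definition valid_vec :: "nat \<Rightarrow> zvec \<Rightarrow> bool" where
  "valid_vec m c \<longleftrightarrow> (\<forall>i. i \<notin> {1..m} \<longrightarrow> c i = 0)"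

definition lam_form :: "nat \<Rightarrow> (nat \<Rightarrow> nat \<Rightarrow> int) \<Rightarrow> zvec \<Rightarrow> zvec \<Rightarrow> int" where
  "lam_form m L a b = (\<Sum>i\<in>{1..m}. \<Sum>j\<in>{1..m}. a i * L i j * b j)"

definition qkey_mul :: "nat \<Rightarrow> (nat \<Rightarrow> nat \<Rightarrow> int) \<Rightarrow> qkey \<Rightarrow> qkey \<Rightarrow> qkey" where
  "qkey_mul m L x y = ((\<lambda>i. fst x i + fst y i), snd x + snd y + lam_form m L (fst x) (fst y))"

definition qt_carrier :: "nat \<Rightarrow> qt set" where
  "qt_carrier m = {f. finite {x. f x \<noteq> 0} \<and> (\<forall>x. f x \<noteq> 0 \<longrightarrow> valid_vec m (fst x))}"

definition qt_mult :: "nat \<Rightarrow> (nat \<Rightarrow> nat \<Rightarrow> int) \<Rightarrow> qt \<Rightarrow> qt \<Rightarrow> qt" where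
  "qt_mult m L f g = (\<lambda>z. \<Sum>p\<in>{(x, y). f x \<noteq> 0 \<and> g y \<noteq> 0 \<and> qkey_mul m L x y = z}.
       f (fst p) * g (snd p))"

definition qmon :: "zvec \<Rightarrow> int \<Rightarrow> qt" where
  "qmon c k = (\<lambda>x. if x = (c, k) then 1 else 0)"

definition qt_ring :: "nat \<Rightarrow> (nat \<Rightarrow> nat \<Rightarrow> int) \<Rightarrow> qt ring" where
  "qt_ring m L = \<lparr> carrier = qt_carrier m, monoid.mult = qt_mult m L,
      one = qmon (\<lambda>i. 0) 0, zero = (\<lambda>x. 0), add = (\<lambda>f g x. f x + g x) \<rparr>"

definition Xv :: "zvec \<Rightarrow> qt" where
  "Xv c = qmon c 0"

definition evec :: "nat \<Rightarrow> zvec" where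
  "evec k = (\<lambda>i. if i = k then 1 else 0)"

definition pos_part :: "zvec \<Rightarrow> zvec" where
  "pos_part v = (\<lambda>i. max (v i) 0)"

text \<open>The coefficient ring Z[q^(+-1/2)], embedded in T(Lambda) as span of t^k X(0).\<close>
definition base_ring :: "nat \<Rightarrow> qt set" where
  "base_ring m = {f \<in> qt_carrier m. \<forall>x. f x \<noteq> 0 \<longrightarrow> fst x = (\<lambda>i. 0)}"

text \<open>ZP: Laurent polynomials in X_(n+1),...,X_m with coefficients in Z[q^(+-1/2)].\<close>
definition ZP :: "nat \<Rightarrow> nat \<Rightarrow> qt set" where
  "ZP m n = {f \<in> qt_carrier m. \<forall>x. f x \<noteq> 0 \<longrightarrow> (\<forall>i\<in>{1..n}. fst x i = 0)}"

definition ZP_adj :: "nat \<Rightarrow> nat \<Rightarrow> (nat \<Rightarrow> nat \<Rightarrow> int) \<Rightarrow> qt set \<Rightarrow> qt set" where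
  "ZP_adj m n L Ys = generate_ring (qt_ring m L) (ZP m n \<union> Ys)"

definition compatible_pair ::
  "nat \<Rightarrow> nat \<Rightarrow> (nat \<Rightarrow> nat \<Rightarrow> int) \<Rightarrow> (nat \<Rightarrow> nat \<Rightarrow> int) \<Rightarrow> bool" where
  "compatible_pair m n L B \<longleftrightarrow>
     (\<forall>i\<in>{1..m}. \<forall>j\<in>{1..m}. L i j = - L j i) \<and>
     (\<exists>dt :: nat \<Rightarrow> int. (\<forall>k\<in>{1..n}. dt k > 0) \<and>
        (\<forall>i\<in>{1..m}. \<forall>k\<in>{1..n}.
           (\<Sum>j\<in>{1..m}. L i j * B j k) = (if i = k then - dt k else 0)))"

definition beta :: "nat \<Rightarrow> (nat \<Rightarrow> nat \<Rightarrow> int) \<Rightarrow> (nat \<Rightarrow> int) \<Rightarrow> nat \<Rightarrow> zvec" where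
  "beta m B d k = (\<lambda>j. if j \<in> {1..m} then B j k div d k else 0)"

definition seed_data ::
  "nat \<Rightarrow> nat \<Rightarrow> (nat \<Rightarrow> nat \<Rightarrow> int) \<Rightarrow> (nat \<Rightarrow> int) \<Rightarrow> (nat \<Rightarrow> nat \<Rightarrow> qt) \<Rightarrow> bool" where
  "seed_data m n B d h \<longleftrightarrow>
     (\<forall>k\<in>{1..n}. d k > 0 \<and> (\<forall>j\<in>{1..m}. d k dvd B j k) \<and>
        (\<forall>r\<in>{0..nat (d k)}. h k r \<in> base_ring m \<and> h k r = h k (nat (d k) - r)) \<and>
        h k 0 = qmon (\<lambda>i. 0) 0 \<and> h k (nat (d k)) = qmon (\<lambda>i. 0) 0)"

definition mut_var ::
  "nat \<Rightarrow> (nat \<Rightarrow> nat \<Rightarrow> int) \<Rightarrow> (nat \<Rightarrow> nat \<Rightarrow> int) \<Rightarrow> (nat \<Rightarrow> int) \<Rightarrow> (nat \<Rightarrow> nat \<Rightarrow> qt) \<Rightarrow> nat \<Rightarrow> qt" where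
  "mut_var m L B d h i =
     (\<lambda>x. \<Sum>r\<in>{0..nat (d i)}. qt_mult m L (h i r)
              (Xv (\<lambda>j. int r * pos_part (beta m B d i) j
                     + (d i - int r) * pos_part (\<lambda>l. - beta m B d i l) j - evec i j)) x)"

definition ring_center :: "nat \<Rightarrow> (nat \<Rightarrow> nat \<Rightarrow> int) \<Rightarrow> qt set \<Rightarrow> qt set" where
  "ring_center m L R = {c \<in> R. \<forall>r\<in>R. qt_mult m L c r = qt_mult m L r c}"

definition ring_invertible :: "nat \<Rightarrow> (nat \<Rightarrow> nat \<Rightarrow> int) \<Rightarrow> qt set \<Rightarrow> qt \<Rightarrow> bool" where
  "ring_invertible m L R c \<longleftrightarrow>
     (\<exists>e\<in>R. qt_mult m L c e = qmon (\<lambda>i. 0) 0 \<and> qt_mult m L e c = qmon (\<lambda>i. 0) 0)"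

definition divides_in :: "nat \<Rightarrow> (nat \<Rightarrow> nat \<Rightarrow> int) \<Rightarrow> qt set \<Rightarrow> qt \<Rightarrow> qt \<Rightarrow> bool" where
  "divides_in m L R c a \<longleftrightarrow> (\<exists>r\<in>R. a = qt_mult m L c r)"

text \<open>Coprimality of a and b in R = ZP[X_1,...,X_n]: no non-invertible central element
  of R divides both (central elements: left and right divisibility coincide).\<close>
definition coprime_in :: "nat \<Rightarrow> (nat \<Rightarrow> nat \<Rightarrow> int) \<Rightarrow> qt set \<Rightarrow> qt \<Rightarrow> qt \<Rightarrow> bool" where
  "coprime_in m L R a b \<longleftrightarrow>
     \<not> (\<exists>c\<in>ring_center m L R. \<not> ring_invertible m L R c \<and>
          divides_in m L R c a \<and> divides_in m L R c b)"

definition coprime_seed ::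
  "nat \<Rightarrow> nat \<Rightarrow> (nat \<Rightarrow> nat \<Rightarrow> int) \<Rightarrow> (nat \<Rightarrow> nat \<Rightarrow> int) \<Rightarrow> (nat \<Rightarrow> int) \<Rightarrow> (nat \<Rightarrow> nat \<Rightarrow> qt) \<Rightarrow> bool" where
  "coprime_seed m n L B d h \<longleftrightarrow>
     (\<forall>i\<in>{1..n}. \<forall>j\<in>{1..n}. i \<noteq> j \<longrightarrow>
        coprime_in m L (ZP_adj m n L (Xv ` evec ` {1..n}))
          (qt_mult m L (Xv (evec i)) (mut_var m L B d h i))
          (qt_mult m L (Xv (evec j)) (mut_var m L B d h j)))"

end

theory Submission
  imports Defs
begin

text \<open>
  The inclusion from left to right is immediate: \<open>X\<^sub>2'\<close> is a Laurent polynomial in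
  \<open>X\<^sub>1, X\<^sub>2\<close> with non-negative exponent of \<open>X\<^sub>1\<close>, and symmetrically.
  For the converse let \<open>C\<^sub>k\<close> be the set of Laurent polynomials whose component of
  \<open>X\<^sub>k\<close>-degree \<open>-n < 0\<close> has the form \<open>(X\<^sub>k')\<^sup>n g\<close> with \<open>g\<close> of \<open>X\<^sub>k\<close>-degree zero.
  As \<open>X\<^sub>k'\<close> is homogeneous of \<open>X\<^sub>k\<close>-degree \<open>-1\<close> and normalizes the elements of
  \<open>X\<^sub>k\<close>-degree zero (they commute up to a twist of the \<open>q\<close>-powers, by compatibility of
  \<open>(\<Lambda>, B)\<close>), \<open>C\<^sub>k\<close> is a ring, so it contains the \<open>k\<close>-th upper bound. An element of
  \<open>C\<^sub>1 \<inter> C\<^sub>2\<close> is shown to lie in \<open>\<bbbZ>\<bbbP>[X\<^sub>1,X\<^sub>1',X\<^sub>2,X\<^sub>2']\<close> by induction on its lowest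
  \<open>X\<^sub>1\<close>-degree: the lowest component \<open>(X\<^sub>1')\<^sup>K g\<close> is reproduced, one \<open>X\<^sub>2\<close>-degree of \<open>g\<close>
  at a time, by an element of \<open>\<bbbZ>\<bbbP>[X\<^sub>1,X\<^sub>1',X\<^sub>2,X\<^sub>2']\<close>. The required divisibilities
  come from comparing lowest terms: if \<open>b\<^sub>1\<^sub>2 \<noteq> 0\<close> the lowest \<open>X\<^sub>1\<close>-term of \<open>X\<^sub>2'\<close> is a
  monomial; if \<open>b\<^sub>1\<^sub>2 = 0\<close> then \<open>X\<^sub>1'\<close> does not involve \<open>X\<^sub>2\<close> nor \<open>X\<^sub>2'\<close> involve \<open>X\<^sub>1\<close>,
  and a linear form vanishing on \<open>\<beta>\<^sup>2\<close> but not on \<open>\<beta>\<^sup>1\<close> makes the lowest term of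
  \<open>(X\<^sub>1')\<^sup>K\<close> a monomial.
\<close>


section \<open>Arithmetic of the quantum torus\<close>

definition supp :: "qt \<Rightarrow> qkey set" where "supp f = {x. f x \<noteq> 0}"

lemma lam_add_right: "lam_form m L a (\<lambda>i. b i + c i) = lam_form m L a b + lam_form m L a c"
  unfolding lam_form_def by (simp add: distrib_left sum.distrib)

lemma lam_zero_left[simp]: "lam_form m L (\<lambda>i. 0) c = 0" by (simp add: lam_form_def)

lemma lam_zero_right[simp]: "lam_form m L a (\<lambda>i. 0) = 0" by (simp add: lam_form_def)

lemma carrier_finite: "f \<in> qt_carrier m \<Longrightarrow> finite (supp f)"
  by (simp add: qt_carrier_def supp_def)

lemma qt_mult_sum:
  assumes "finite S" "finite T" "supp f \<subseteq> S" "supp g \<subseteq> T"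
  shows "qt_mult m L f g z = (\<Sum>x\<in>S. \<Sum>y\<in>T. if qkey_mul m L x y = z then f x * g y else 0)"
proof -
  let ?P = "{(x, y). f x \<noteq> 0 \<and> g y \<noteq> 0 \<and> qkey_mul m L x y = z}"
  have sub: "?P \<subseteq> S \<times> T" using assms(3,4) by (auto simp: supp_def)
  have "qt_mult m L f g z = (\<Sum>p\<in>?P. f (fst p) * g (snd p))" by (simp add: qt_mult_def)
  also have "\<dots> = (\<Sum>p\<in>S\<times>T. if qkey_mul m L (fst p) (snd p) = z then f (fst p) * g (snd p) else 0)"
    by (rule sum.mono_neutral_cong_left) (use assms sub in auto)
  also have "\<dots> = (\<Sum>x\<in>S. \<Sum>y\<in>T. if qkey_mul m L x y = z then f x * g y else 0)"
    by (simp add: sum.cartesian_product case_prod_unfold)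
  finally show ?thesis .
qed

lemma supp_mult:
  assumes "finite (supp f)" "finite (supp g)"
  shows "supp (qt_mult m L f g) \<subseteq> (\<lambda>(x,y). qkey_mul m L x y) ` (supp f \<times> supp g)"
proof
  fix z assume "z \<in> supp (qt_mult m L f g)"
  hence "qt_mult m L f g z \<noteq> 0" by (simp add: supp_def)
  hence nz: "qt_mult m L f g z \<noteq> 0" .
  have "{(x, y). f x \<noteq> 0 \<and> g y \<noteq> 0 \<and> qkey_mul m L x y = z} \<noteq> {}"
  proof
    assume e: "{(x, y). f x \<noteq> 0 \<and> g y \<noteq> 0 \<and> qkey_mul m L x y = z} = {}"
    have "qt_mult m L f g z = (\<Sum>p\<in>{(x, y). f x \<noteq> 0 \<and> g y \<noteq> 0 \<and> qkey_mul m L x y = z}.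
       f (fst p) * g (snd p))" by (simp add: qt_mult_def)
    also have "\<dots> = 0" by (simp only: e sum.empty)
    finally have "qt_mult m L f g z = 0" .
    thus False using nz by simp
  qed
  then obtain x y where "f x \<noteq> 0" "g y \<noteq> 0" "qkey_mul m L x y = z" by auto
  thus "z \<in> (\<lambda>(x,y). qkey_mul m L x y) ` (supp f \<times> supp g)"
    by (intro image_eqI[of _ _ "(x,y)"]) (auto simp: supp_def)
qed

lemma finite_supp_mult:
  assumes "finite (supp f)" "finite (supp g)"
  shows "finite (supp (qt_mult m L f g))"
  using supp_mult[OF assms] assms by (meson finite_SigmaI finite_imageI finite_subset)

lemma valid_add: "valid_vec m a \<Longrightarrow> valid_vec m b \<Longrightarrow> valid_vec m (\<lambda>i. a i + b i)"
  by (simp add: valid_vec_def)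

lemma carrier_valid: "f \<in> qt_carrier m \<Longrightarrow> f x \<noteq> 0 \<Longrightarrow> valid_vec m (fst x)"
  unfolding qt_carrier_def by blast

lemma mult_carrier:
  assumes "f \<in> qt_carrier m" "g \<in> qt_carrier m"
  shows "qt_mult m L f g \<in> qt_carrier m"
proof -
  have fin: "finite (supp f)" "finite (supp g)" using assms carrier_finite by auto
  have "finite {x. qt_mult m L f g x \<noteq> 0}" using finite_supp_mult[OF fin] by (simp add: supp_def)
  moreover have "valid_vec m (fst z)" if "qt_mult m L f g z \<noteq> 0" for z
  proof -
    have "z \<in> supp (qt_mult m L f g)" using that by (simp add: supp_def)
    hence "z \<in> (\<lambda>(x,y). qkey_mul m L x y) ` (supp f \<times> supp g)"
      using supp_mult[of f g m L] fin by (meson subsetD)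
    then obtain x y where "x \<in> supp f" "y \<in> supp g" "z = qkey_mul m L x y"
      by auto
    moreover have "valid_vec m (fst x)" "valid_vec m (fst y)"
      using assms \<open>x \<in> supp f\<close> \<open>y \<in> supp g\<close> carrier_valid by (auto simp: supp_def)
    ultimately show ?thesis by (simp add: qkey_mul_def valid_add)
  qed
  ultimately show ?thesis unfolding qt_carrier_def by blast
qed

lemma lam_diff_left: "lam_form m L (\<lambda>i. a i - b i) c = lam_form m L a c - lam_form m L b c"
  unfolding lam_form_def by (simp add: left_diff_distrib sum_subtractf)

lemma lam_diff_right: "lam_form m L a (\<lambda>i. b i - c i) = lam_form m L a b - lam_form m L a c"
  unfolding lam_form_def by (simp add: right_diff_distrib sum_subtractf)

definition ldiv :: "nat \<Rightarrow> (nat \<Rightarrow> nat \<Rightarrow> int) \<Rightarrow> qkey \<Rightarrow> qkey \<Rightarrow> qkey" where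
  "ldiv m L x z = ((\<lambda>i. fst z i - fst x i), snd z - snd x - lam_form m L (fst x) (\<lambda>i. fst z i - fst x i))"

definition rdiv :: "nat \<Rightarrow> (nat \<Rightarrow> nat \<Rightarrow> int) \<Rightarrow> qkey \<Rightarrow> qkey \<Rightarrow> qkey" where
  "rdiv m L z u = ((\<lambda>i. fst z i - fst u i), snd z - snd u - lam_form m L (\<lambda>i. fst z i - fst u i) (fst u))"

lemma qkey_mul_eq_ldiv: "qkey_mul m L x y = z \<longleftrightarrow> y = ldiv m L x z"
proof
  assume "qkey_mul m L x y = z"
  thus "y = ldiv m L x z" unfolding qkey_mul_def ldiv_def
    by (cases y, auto simp: fun_eq_iff)
next
  assume y: "y = ldiv m L x z"
  have e: "(\<lambda>i. fst x i + (fst z i - fst x i)) = fst z" by auto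
  show "qkey_mul m L x y = z" unfolding y qkey_mul_def ldiv_def
    by (cases z) (simp add: e)
qed

lemma qkey_mul_eq_rdiv: "qkey_mul m L x y = z \<longleftrightarrow> x = rdiv m L z y"
proof
  assume "qkey_mul m L x y = z"
  thus "x = rdiv m L z y" unfolding qkey_mul_def rdiv_def
    by (cases x, auto simp: fun_eq_iff)
next
  assume x: "x = rdiv m L z y"
  have e: "(\<lambda>i. fst z i - fst y i + fst y i) = fst z" by auto
  show "qkey_mul m L x y = z" unfolding x qkey_mul_def rdiv_def
    by (cases z) (simp add: e)
qed

lemma ldiv_rdiv: "ldiv m L x (rdiv m L z u) = rdiv m L (ldiv m L x z) u"
proof -
  have e1: "(\<lambda>i. fst z i - fst u i - fst x i) = (\<lambda>i. fst z i - fst x i - fst u i)" by auto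
  show ?thesis unfolding ldiv_def rdiv_def
    by (simp add: e1 lam_diff_left lam_diff_right)
qed

lemma qt_mult_left:
  assumes "finite S" "supp f \<subseteq> S" "finite (supp g)"
  shows "qt_mult m L f g z = (\<Sum>x\<in>S. f x * g (ldiv m L x z))"
proof -
  have "qt_mult m L f g z = (\<Sum>x\<in>S. \<Sum>y\<in>supp g. if qkey_mul m L x y = z then f x * g y else 0)"
    by (rule qt_mult_sum[OF assms(1,3,2)]) simp
  also have "\<dots> = (\<Sum>x\<in>S. f x * g (ldiv m L x z))"
  proof (rule sum.cong[OF refl])
    fix x
    have "(\<Sum>y\<in>supp g. if qkey_mul m L x y = z then f x * g y else 0)
        = (\<Sum>y\<in>supp g. if ldiv m L x z = y then f x * g y else 0)"
      by (intro sum.cong refl) (auto simp: qkey_mul_eq_ldiv)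
    also have "\<dots> = f x * g (ldiv m L x z)"
      using assms(3) by (simp add: sum.delta' supp_def)
    finally show "(\<Sum>y\<in>supp g. if qkey_mul m L x y = z then f x * g y else 0) = f x * g (ldiv m L x z)" .
  qed
  finally show ?thesis .
qed

lemma qt_mult_right:
  assumes "finite (supp f)" "finite T" "supp g \<subseteq> T"
  shows "qt_mult m L f g z = (\<Sum>y\<in>T. f (rdiv m L z y) * g y)"
proof -
  have "qt_mult m L f g z = (\<Sum>x\<in>supp f. \<Sum>y\<in>T. if qkey_mul m L x y = z then f x * g y else 0)"
    by (rule qt_mult_sum[OF assms(1,2) _ assms(3)]) simp
  also have "\<dots> = (\<Sum>y\<in>T. \<Sum>x\<in>supp f. if qkey_mul m L x y = z then f x * g y else 0)"
    by (rule sum.swap)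
  also have "\<dots> = (\<Sum>y\<in>T. f (rdiv m L z y) * g y)"
  proof (rule sum.cong[OF refl])
    fix y
    have "(\<Sum>x\<in>supp f. if qkey_mul m L x y = z then f x * g y else 0)
        = (\<Sum>x\<in>supp f. if rdiv m L z y = x then f x * g y else 0)"
      by (intro sum.cong refl) (auto simp: qkey_mul_eq_rdiv)
    also have "\<dots> = f (rdiv m L z y) * g y"
      using assms(1) by (simp add: sum.delta' supp_def)
    finally show "(\<Sum>x\<in>supp f. if qkey_mul m L x y = z then f x * g y else 0) = f (rdiv m L z y) * g y" .
  qed
  finally show ?thesis .
qed

lemma qt_mult_assoc:
  assumes "finite (supp f)" "finite (supp g)" "finite (supp h)"
  shows "qt_mult m L (qt_mult m L f g) h = qt_mult m L f (qt_mult m L g h)"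
proof
  fix z
  have fgh: "finite (supp (qt_mult m L f g))" "finite (supp (qt_mult m L g h))"
    using finite_supp_mult assms by auto
  have "qt_mult m L (qt_mult m L f g) h z = (\<Sum>u\<in>supp h. qt_mult m L f g (rdiv m L z u) * h u)"
    by (rule qt_mult_right[OF fgh(1) assms(3) order_refl])
  also have "\<dots> = (\<Sum>u\<in>supp h. \<Sum>x\<in>supp f. f x * g (ldiv m L x (rdiv m L z u)) * h u)"
    by (simp add: qt_mult_left[OF assms(1) order_refl assms(2)] sum_distrib_right)
  also have "\<dots> = (\<Sum>x\<in>supp f. \<Sum>u\<in>supp h. f x * (g (rdiv m L (ldiv m L x z) u) * h u))"
    by (subst sum.swap) (simp add: ldiv_rdiv mult.assoc)
  also have "\<dots> = (\<Sum>x\<in>supp f. f x * qt_mult m L g h (ldiv m L x z))"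
    by (simp add: qt_mult_right[OF assms(2,3) order_refl] sum_distrib_left)
  also have "\<dots> = qt_mult m L f (qt_mult m L g h) z"
    by (rule qt_mult_left[OF assms(1) order_refl fgh(2), symmetric])
  finally show "qt_mult m L (qt_mult m L f g) h z = qt_mult m L f (qt_mult m L g h) z" .
qed

lemma qt_ring_simps[simp]:
  "carrier (qt_ring m L) = qt_carrier m"
  "mult (qt_ring m L) = qt_mult m L"
  "one (qt_ring m L) = qmon (\<lambda>i. 0) 0"
  "zero (qt_ring m L) = (\<lambda>x. 0)"
  "add (qt_ring m L) = (\<lambda>f g x. f x + g x)"
  by (simp_all add: qt_ring_def)

lemma valid_zero[simp]: "valid_vec m (\<lambda>i. 0)" by (simp add: valid_vec_def)

lemma supp_qmon[simp]: "supp (qmon c k) = {(c,k)}"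
  by (auto simp: supp_def qmon_def)

lemma qmon_carrier[intro]: "valid_vec m c \<Longrightarrow> qmon c k \<in> qt_carrier m"
  by (auto simp: qt_carrier_def qmon_def)

lemma zero_carrier[simp]: "(\<lambda>x. 0) \<in> qt_carrier m" by (simp add: qt_carrier_def)

lemma carrier_intro: "finite (supp f) \<Longrightarrow> (\<And>x. f x \<noteq> 0 \<Longrightarrow> valid_vec m (fst x)) \<Longrightarrow> f \<in> qt_carrier m"
  unfolding qt_carrier_def supp_def by blast

lemma add_carrier[intro]: "f \<in> qt_carrier m \<Longrightarrow> g \<in> qt_carrier m \<Longrightarrow> (\<lambda>x. f x + g x) \<in> qt_carrier m"
proof -
  assume a: "f \<in> qt_carrier m" "g \<in> qt_carrier m"
  have "{x. f x + g x \<noteq> 0} \<subseteq> {x. f x \<noteq> 0} \<union> {x. g x \<noteq> 0}" by auto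
  hence "finite (supp (\<lambda>x. f x + g x))" using a carrier_finite unfolding supp_def
    by (metis (no_types, lifting) finite_Un finite_subset)
  moreover have "valid_vec m (fst x)" if "f x + g x \<noteq> 0" for x
    using that a carrier_valid by (metis add.left_neutral add.right_neutral)
  ultimately show ?thesis by (rule carrier_intro)
qed

lemma neg_carrier[intro]: "f \<in> qt_carrier m \<Longrightarrow> (\<lambda>x. - f x) \<in> qt_carrier m"
  by (simp add: qt_carrier_def)

lemma ldiv_zero: "ldiv m L ((\<lambda>i. 0), 0) z = z"
  by (cases z) (simp add: ldiv_def)

lemma rdiv_zero: "rdiv m L z ((\<lambda>i. 0), 0) = z"
  by (cases z) (simp add: rdiv_def)

lemma qt_mult_one_left: assumes "finite (supp f)" shows "qt_mult m L (qmon (\<lambda>i. 0) 0) f = f"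
proof (rule ext)
  fix z
  have "qt_mult m L (qmon (\<lambda>i. 0) 0) f z = (\<Sum>x\<in>{((\<lambda>i. 0), 0)}. qmon (\<lambda>i. 0) 0 x * f (ldiv m L x z))"
    by (rule qt_mult_left) (use assms in simp_all)
  also have "\<dots> = f z" by (simp add: qmon_def ldiv_zero)
  finally show "qt_mult m L (qmon (\<lambda>i. 0) 0) f z = f z" .
qed

lemma qt_mult_one_right: assumes "finite (supp f)" shows "qt_mult m L f (qmon (\<lambda>i. 0) 0) = f"
proof (rule ext)
  fix z
  have "qt_mult m L f (qmon (\<lambda>i. 0) 0) z = (\<Sum>y\<in>{((\<lambda>i. 0), 0)}. f (rdiv m L z y) * qmon (\<lambda>i. 0) 0 y)"
    by (rule qt_mult_right) (use assms in simp_all)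
  also have "\<dots> = f z" by (simp add: qmon_def rdiv_zero)
  finally show "qt_mult m L f (qmon (\<lambda>i. 0) 0) z = f z" .
qed

lemma qt_mult_add_left:
  "finite (supp f) \<Longrightarrow> finite (supp g) \<Longrightarrow> finite (supp h) \<Longrightarrow>
   qt_mult m L (\<lambda>x. f x + g x) h = (\<lambda>x. qt_mult m L f h x + qt_mult m L g h x)"
proof (rule ext)
  fix z assume a: "finite (supp f)" "finite (supp g)" "finite (supp h)"
  have fg: "finite (supp (\<lambda>x. f x + g x))"
    by (rule finite_subset[of _ "supp f \<union> supp g"]) (use a in \<open>auto simp: supp_def\<close>)
  show "qt_mult m L (\<lambda>x. f x + g x) h z = qt_mult m L f h z + qt_mult m L g h z"
    by (simp add: qt_mult_right[OF fg a(3) order_refl] qt_mult_right[OF a(1) a(3) order_refl]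
        qt_mult_right[OF a(2) a(3) order_refl] distrib_right sum.distrib)
qed

lemma qt_mult_add_right:
  "finite (supp f) \<Longrightarrow> finite (supp g) \<Longrightarrow> finite (supp h) \<Longrightarrow>
   qt_mult m L h (\<lambda>x. f x + g x) = (\<lambda>x. qt_mult m L h f x + qt_mult m L h g x)"
proof (rule ext)
  fix z assume a: "finite (supp f)" "finite (supp g)" "finite (supp h)"
  have fg: "finite (supp (\<lambda>x. f x + g x))"
    by (rule finite_subset[of _ "supp f \<union> supp g"]) (use a in \<open>auto simp: supp_def\<close>)
  show "qt_mult m L h (\<lambda>x. f x + g x) z = qt_mult m L h f z + qt_mult m L h g z"
    by (simp add: qt_mult_left[OF a(3) order_refl fg] qt_mult_left[OF a(3) order_refl a(1)]
        qt_mult_left[OF a(3) order_refl a(2)] distrib_left sum.distrib)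
qed

lemma qt_ring_ring: "ring (qt_ring m L)"
proof (rule ringI)
  show "abelian_group (qt_ring m L)"
  proof (rule abelian_groupI, simp_all)
    fix x assume "x \<in> qt_carrier m"
    thus "\<exists>y\<in>qt_carrier m. (\<lambda>xa. y xa + x xa) = (\<lambda>x. 0)"
      by (intro bexI[of _ "\<lambda>z. - x z"]) auto
  qed (auto simp: add.assoc add.commute)
  show "monoid (qt_ring m L)"
    by (rule monoidI) (auto simp: mult_carrier qt_mult_one_left qt_mult_one_right carrier_finite
        qt_mult_assoc)
qed (auto simp: qt_mult_add_left qt_mult_add_right carrier_finite)

lemma qt_a_inv: "f \<in> qt_carrier m \<Longrightarrow> a_inv (qt_ring m L) f = (\<lambda>x. - f x)"
  using abelian_group.minus_equality[OF ring.is_abelian_group[OF qt_ring_ring, of m L], of "\<lambda>x. - f x" f]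
  by auto

lemma qmon_mult: "qt_mult m L (qmon c k) (qmon d l) = qmon (\<lambda>i. c i + d i) (k + l + lam_form m L c d)"
proof (rule ext)
  fix z
  show "qt_mult m L (qmon c k) (qmon d l) z = qmon (\<lambda>i. c i + d i) (k + l + lam_form m L c d) z"
  proof -
    have "qt_mult m L (qmon c k) (qmon d l) z = (\<Sum>x\<in>{(c,k)}. qmon c k x * qmon d l (ldiv m L x z))"
      by (rule qt_mult_left) simp_all
    also have "\<dots> = (if ldiv m L (c,k) z = (d,l) then 1 else 0)" by (simp add: qmon_def)
    also have "\<dots> = (if qkey_mul m L (c,k) (d,l) = z then 1 else 0)"
      using qkey_mul_eq_ldiv[of m L "(c,k)" "(d,l)" z] by auto
    also have "\<dots> = qmon (\<lambda>i. c i + d i) (k + l + lam_form m L c d) z"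
      by (auto simp: qmon_def qkey_mul_def)
    finally show ?thesis .
  qed
qed

definition skew_form :: "nat \<Rightarrow> (nat \<Rightarrow> nat \<Rightarrow> int) \<Rightarrow> bool" where
  "skew_form m L \<longleftrightarrow> (\<forall>i\<in>{1..m}. \<forall>j\<in>{1..m}. L i j = - L j i)"

lemma lam_skew: assumes "skew_form m L" shows "lam_form m L a b = - lam_form m L b a"
proof -
  have "lam_form m L a b = (\<Sum>i\<in>{1..m}. \<Sum>j\<in>{1..m}. - (b j * L j i * a i))"
    unfolding lam_form_def
  proof (intro sum.cong refl)
    fix i j assume "i \<in> {1..m}" "j \<in> {1..m}"
    hence "L i j = - L j i" using assms unfolding skew_form_def by blast
    thus "a i * L i j * b j = - (b j * L j i * a i)" by simp
  qed
  also have "\<dots> = (\<Sum>j\<in>{1..m}. \<Sum>i\<in>{1..m}. - (b j * L j i * a i))" by (rule sum.swap)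
  also have "\<dots> = - lam_form m L b a" by (simp add: lam_form_def sum_negf)
  finally show ?thesis .
qed

lemma lam_self: "skew_form m L \<Longrightarrow> lam_form m L a a = 0"
  using lam_skew[of m L a a] by simp

lemma fst_qkey_mul[simp]: "fst (qkey_mul m L x y) = (\<lambda>i. fst x i + fst y i)"
  by (simp add: qkey_mul_def)

lemma fst_ldiv[simp]: "fst (ldiv m L x z) = (\<lambda>i. fst z i - fst x i)"
  by (simp add: ldiv_def)

lemma fst_rdiv[simp]: "fst (rdiv m L z y) = (\<lambda>i. fst z i - fst y i)"
  by (simp add: rdiv_def)

lemma lam_smul_left: "lam_form m L (\<lambda>i. n * a i) b = n * lam_form m L a b"
  unfolding lam_form_def by (simp add: sum_distrib_left algebra_simps)

lemma lam_smul_right: "lam_form m L a (\<lambda>i. n * b i) = n * lam_form m L a b"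
  unfolding lam_form_def by (simp add: sum_distrib_left algebra_simps)

lemma lam_neg_left: "lam_form m L (\<lambda>i. - a i) b = - lam_form m L a b"
  using lam_smul_left[of m L "-1" a b] by simp

lemma lam_neg_right: "lam_form m L a (\<lambda>i. - b i) = - lam_form m L a b"
  using lam_smul_right[of m L a "-1" b] by simp

lemma qmon_mult_qmon_neg: assumes "skew_form m L"
  shows "qt_mult m L (qmon c k) (qmon (\<lambda>i. - c i) (- k)) = qmon (\<lambda>i. 0) 0"
  using lam_self[OF assms, of c] by (simp add: qmon_mult lam_neg_right)

lemma qmon_neg_mult_qmon: assumes "skew_form m L"
  shows "qt_mult m L (qmon (\<lambda>i. - c i) (- k)) (qmon c k) = qmon (\<lambda>i. 0) 0"
  using lam_self[OF assms, of c] by (simp add: qmon_mult lam_neg_left)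

lemma qmon_mult_apply: "finite (supp f) \<Longrightarrow> qt_mult m L (qmon c k) f (qkey_mul m L (c,k) x) = f x"
proof -
  assume f: "finite (supp f)"
  have "qt_mult m L (qmon c k) f (qkey_mul m L (c,k) x) =
     (\<Sum>y\<in>{(c,k)}. qmon c k y * f (ldiv m L y (qkey_mul m L (c,k) x)))"
    by (rule qt_mult_left[OF _ _ f]) simp_all
  also have "\<dots> = f x" using qkey_mul_eq_ldiv[of m L "(c,k)" x "qkey_mul m L (c,k) x"]
    by (simp add: qmon_def)
  finally show ?thesis .
qed

lemma qmon_mult_nonzero:
  "finite (supp f) \<Longrightarrow> f \<noteq> (\<lambda>x. 0) \<Longrightarrow> qt_mult m L (qmon c k) f \<noteq> (\<lambda>x. 0)"
  by (metis qmon_mult_apply)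

fun qt_pow :: "nat \<Rightarrow> (nat \<Rightarrow> nat \<Rightarrow> int) \<Rightarrow> qt \<Rightarrow> nat \<Rightarrow> qt" where
  "qt_pow m L f 0 = qmon (\<lambda>i. 0) 0"
| "qt_pow m L f (Suc n) = qt_mult m L (qt_pow m L f n) f"

lemma qt_pow_carrier[intro]: "f \<in> qt_carrier m \<Longrightarrow> qt_pow m L f n \<in> qt_carrier m"
  by (induction n) (auto intro: mult_carrier)

lemma qt_pow_add: assumes f: "f \<in> qt_carrier m"
  shows "qt_pow m L f (a + b) = qt_mult m L (qt_pow m L f a) (qt_pow m L f b)"
proof (induction b)
  case 0 thus ?case by (simp add: qt_mult_one_right[OF carrier_finite[OF qt_pow_carrier[OF f]]])
next
  case (Suc b)
  thus ?case by (simp add: qt_mult_assoc[OF carrier_finite[OF qt_pow_carrier[OF f]]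
     carrier_finite[OF qt_pow_carrier[OF f]] carrier_finite[OF f]])
qed

lemma lam_evec_left: assumes "a \<in> {1..m}" shows "lam_form m L (evec a) b = (\<Sum>j\<in>{1..m}. L a j * b j)"
proof -
  have "lam_form m L (evec a) b = (\<Sum>i\<in>{1..m}. if i = a then (\<Sum>j\<in>{1..m}. L i j * b j) else 0)"
    unfolding lam_form_def evec_def by (rule sum.cong) (auto simp: sum_distrib_left)
  also have "\<dots> = (\<Sum>j\<in>{1..m}. L a j * b j)" using assms by (simp add: sum.delta')
  finally show ?thesis .
qed

lemma lam_sum_left: "lam_form m L c b = (\<Sum>a\<in>{1..m}. c a * lam_form m L (evec a) b)"
proof -
  have "(\<Sum>a\<in>{1..m}. c a * lam_form m L (evec a) b) = (\<Sum>a\<in>{1..m}. c a * (\<Sum>j\<in>{1..m}. L a j * b j))"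
    by (rule sum.cong) (simp_all add: lam_evec_left)
  thus ?thesis by (simp add: lam_form_def sum_distrib_left mult.assoc)
qed

lemma finite_supp_sum: "finite S \<Longrightarrow> (\<And>s. s \<in> S \<Longrightarrow> finite (supp (G s))) \<Longrightarrow>
  finite (supp (\<lambda>x. \<Sum>s\<in>S. G s x))"
proof -
  assume S: "finite S" and G: "\<And>s. s \<in> S \<Longrightarrow> finite (supp (G s))"
  have "supp (\<lambda>x. \<Sum>s\<in>S. G s x) \<subseteq> (\<Union>s\<in>S. supp (G s))"
  proof
    fix x assume "x \<in> supp (\<lambda>x. \<Sum>s\<in>S. G s x)"
    hence "(\<Sum>s\<in>S. G s x) \<noteq> 0" by (simp add: supp_def)
    then obtain s where "s \<in> S" "G s x \<noteq> 0" by (meson sum.neutral)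
    thus "x \<in> (\<Union>s\<in>S. supp (G s))" by (auto simp: supp_def)
  qed
  thus ?thesis using S G by (meson finite_UN_I finite_subset)
qed

lemma finite_supp_scale: "finite (supp f) \<Longrightarrow> finite (supp (\<lambda>x. n * f x))"
  by (rule finite_subset[of _ "supp f"]) (auto simp: supp_def)

lemma sum_carrier[intro]: "finite S \<Longrightarrow> (\<And>s. s \<in> S \<Longrightarrow> G s \<in> qt_carrier m) \<Longrightarrow>
  (\<lambda>x. \<Sum>s\<in>S. G s x) \<in> qt_carrier m"
proof (induction S rule: finite_induct)
  case empty thus ?case by simp
next
  case (insert a S) thus ?case using add_carrier[of "G a" m "\<lambda>x. \<Sum>s\<in>S. G s x"] by simp
qed

lemma mult_sum_right:
  assumes "finite (supp f)" "finite S" "\<And>s. s \<in> S \<Longrightarrow> finite (supp (G s))"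
  shows "qt_mult m L f (\<lambda>x. \<Sum>s\<in>S. G s x) = (\<lambda>x. \<Sum>s\<in>S. qt_mult m L f (G s) x)"
proof (rule ext)
  fix z
  have "qt_mult m L f (\<lambda>x. \<Sum>s\<in>S. G s x) z = (\<Sum>x\<in>supp f. f x * (\<Sum>s\<in>S. G s (ldiv m L x z)))"
    by (rule qt_mult_left[OF assms(1) order_refl finite_supp_sum[OF assms(2,3)]])
  also have "\<dots> = (\<Sum>s\<in>S. \<Sum>x\<in>supp f. f x * G s (ldiv m L x z))"
    by (simp add: sum_distrib_left sum.swap[of _ S])
  also have "\<dots> = (\<Sum>s\<in>S. qt_mult m L f (G s) z)"
    by (intro sum.cong refl qt_mult_left[OF assms(1) order_refl assms(3), symmetric])
  finally show "qt_mult m L f (\<lambda>x. \<Sum>s\<in>S. G s x) z = (\<Sum>s\<in>S. qt_mult m L f (G s) z)" .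
qed

lemma mult_sum_left:
  assumes "finite (supp f)" "finite S" "\<And>s. s \<in> S \<Longrightarrow> finite (supp (G s))"
  shows "qt_mult m L (\<lambda>x. \<Sum>s\<in>S. G s x) f = (\<lambda>x. \<Sum>s\<in>S. qt_mult m L (G s) f x)"
proof (rule ext)
  fix z
  have "qt_mult m L (\<lambda>x. \<Sum>s\<in>S. G s x) f z = (\<Sum>y\<in>supp f. (\<Sum>s\<in>S. G s (rdiv m L z y)) * f y)"
    by (rule qt_mult_right[OF finite_supp_sum[OF assms(2,3)] assms(1) order_refl])
  also have "\<dots> = (\<Sum>s\<in>S. \<Sum>y\<in>supp f. G s (rdiv m L z y) * f y)"
    by (simp add: sum_distrib_right sum.swap[of _ S])
  also have "\<dots> = (\<Sum>s\<in>S. qt_mult m L (G s) f z)"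
    by (intro sum.cong refl qt_mult_right[OF assms(3) assms(1) order_refl, symmetric])
  finally show "qt_mult m L (\<lambda>x. \<Sum>s\<in>S. G s x) f z = (\<Sum>s\<in>S. qt_mult m L (G s) f z)" .
qed

lemma mult_scale_right:
  assumes "finite (supp f)" "finite (supp g)"
  shows "qt_mult m L f (\<lambda>x. n * g x) = (\<lambda>x. n * qt_mult m L f g x)"
proof (rule ext)
  fix z
  show "qt_mult m L f (\<lambda>x. n * g x) z = n * qt_mult m L f g z"
    by (simp add: qt_mult_left[OF assms(1) order_refl finite_supp_scale[OF assms(2)]]
        qt_mult_left[OF assms(1) order_refl assms(2)] sum_distrib_left algebra_simps)
qed

lemma mult_zero_right[simp]: "qt_mult m L f (\<lambda>x. 0) = (\<lambda>x. 0)"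
  by (simp add: qt_mult_def supp_def)

lemma mult_neg_right:
  "finite (supp f) \<Longrightarrow> finite (supp g) \<Longrightarrow> qt_mult m L f (\<lambda>x. - g x) = (\<lambda>x. - qt_mult m L f g x)"
  using mult_scale_right[of f g m L "-1"] by simp

lemma mult_diff_right:
  "finite (supp f) \<Longrightarrow> finite (supp g) \<Longrightarrow> finite (supp h) \<Longrightarrow>
   qt_mult m L f (\<lambda>x. g x - h x) = (\<lambda>x. qt_mult m L f g x - qt_mult m L f h x)"
  using qt_mult_add_right[of g "\<lambda>x. - h x" f m L] mult_neg_right[of f h m L]
  by (simp add: finite_supp_scale[of h "-1", simplified])

lemma qt_mult_assoc_carrier: "f \<in> qt_carrier m \<Longrightarrow> g \<in> qt_carrier m \<Longrightarrow> h \<in> qt_carrier m \<Longrightarrow>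
  qt_mult m L (qt_mult m L f g) h = qt_mult m L f (qt_mult m L g h)"
  by (rule qt_mult_assoc) (auto intro: carrier_finite)

lemma qt_pow_qmon: assumes "skew_form m L"
  shows "qt_pow m L (qmon c 0) n = qmon (\<lambda>i. int n * c i) 0"
proof (induction n)
  case 0 thus ?case by simp
next
  case (Suc n)
  have "lam_form m L (\<lambda>i. int n * c i) c = 0" using lam_self[OF assms, of c] by (simp add: lam_smul_left)
  moreover have "(\<lambda>i. int n * c i + c i) = (\<lambda>i. int (Suc n) * c i)" by (auto simp: algebra_simps)
  ultimately show ?case using Suc by (simp add: qmon_mult)
qed

lemma qmon_inv_mult_cancel:
  assumes sk: "skew_form m L" and G: "finite (supp G)"
  shows "qt_mult m L (qmon (\<lambda>i. - u i) (- e)) (qt_mult m L (qmon u e) G) = G"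
proof -
  have "qt_mult m L (qmon (\<lambda>i. - u i) (- e)) (qt_mult m L (qmon u e) G) =
     qt_mult m L (qt_mult m L (qmon (\<lambda>i. - u i) (- e)) (qmon u e)) G"
    by (rule qt_mult_assoc[symmetric]) (simp_all add: G)
  also have "\<dots> = G" by (simp add: qmon_neg_mult_qmon[OF sk] qt_mult_one_left G)
  finally show ?thesis .
qed

lemma qmon_mult_inv_cancel:
  assumes sk: "skew_form m L" and G: "finite (supp G)"
  shows "qt_mult m L (qmon u e) (qt_mult m L (qmon (\<lambda>i. - u i) (- e)) G) = G"
proof -
  have "qt_mult m L (qmon u e) (qt_mult m L (qmon (\<lambda>i. - u i) (- e)) G) =
     qt_mult m L (qt_mult m L (qmon u e) (qmon (\<lambda>i. - u i) (- e))) G"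
    by (rule qt_mult_assoc[symmetric]) (simp_all add: G)
  also have "\<dots> = G" by (simp add: qmon_mult_qmon_neg[OF sk] qt_mult_one_left G)
  finally show ?thesis .
qed

lemma supp_add_subset: "supp f \<subseteq> S \<Longrightarrow> supp g \<subseteq> S \<Longrightarrow> supp (\<lambda>x. f x + g x) \<subseteq> S"
proof
  fix x assume a: "supp f \<subseteq> S" "supp g \<subseteq> S" "x \<in> supp (\<lambda>x. f x + g x)"
  hence "f x \<noteq> 0 \<or> g x \<noteq> 0" by (auto simp: supp_def)
  thus "x \<in> S" using a(1,2) by (auto simp: supp_def)
qed

lemma supp_neg_subset: "supp f \<subseteq> S \<Longrightarrow> supp (\<lambda>x. - f x) \<subseteq> S"
  unfolding supp_def by simp

lemma supp_diff_subset: assumes "supp f \<subseteq> S" "supp g \<subseteq> S" shows "supp (\<lambda>x. f x - g x) \<subseteq> S"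
proof
  fix x assume "x \<in> supp (\<lambda>x. f x - g x)"
  hence "f x \<noteq> 0 \<or> g x \<noteq> 0" by (auto simp: supp_def)
  thus "x \<in> S" using assms by (auto simp: supp_def)
qed

lemma supp_sum_subset: assumes "\<And>s. s \<in> I \<Longrightarrow> supp (F s) \<subseteq> S" shows "supp (\<lambda>x. \<Sum>s\<in>I. F s x) \<subseteq> S"
proof
  fix x assume "x \<in> supp (\<lambda>x. \<Sum>s\<in>I. F s x)"
  hence "(\<Sum>s\<in>I. F s x) \<noteq> 0" by (simp add: supp_def)
  then obtain s where "s \<in> I" "F s x \<noteq> 0" by (meson sum.neutral)
  thus "x \<in> S" using assms by (auto simp: supp_def)
qed

lemma supp_empty_zero: "supp f = {} \<Longrightarrow> f = (\<lambda>x. 0)"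
  by (auto simp: supp_def fun_eq_iff)

section \<open>Homogeneous components\<close>

definition additive :: "(zvec \<Rightarrow> int) \<Rightarrow> bool" where
  "additive \<psi> \<longleftrightarrow> (\<forall>a b. \<psi> (\<lambda>i. a i + b i) = \<psi> a + \<psi> b)"

lemma additive_diff: assumes "additive \<psi>" shows "\<psi> (\<lambda>i. a i - b i) = \<psi> a - \<psi> b"
proof -
  have "\<psi> (\<lambda>i. b i + (a i - b i)) = \<psi> b + \<psi> (\<lambda>i. a i - b i)"
    using spec[OF spec[OF assms[unfolded additive_def], of b], of "\<lambda>i. a i - b i"] by simp
  moreover have "(\<lambda>i. b i + (a i - b i)) = a" by auto
  ultimately show ?thesis by simp
qed

lemma additive_coordinate: "additive (\<lambda>c. c i)" by (simp add: additive_def)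

lemma additive_zero: assumes "additive \<psi>" shows "\<psi> (\<lambda>i. 0) = 0"
  using spec[OF spec[OF assms[unfolded additive_def], of "\<lambda>i. 0"], of "\<lambda>i. 0"] by simp

definition lin :: "nat \<Rightarrow> zvec \<Rightarrow> zvec \<Rightarrow> int" where
  "lin m u c = (\<Sum>a\<in>{1..m}. u a * c a)"

lemma additive_lin: "additive (lin m u)"
  by (simp add: additive_def lin_def distrib_left sum.distrib)

lemma lin_smul: "lin m u (\<lambda>i. n * c i) = n * lin m u c"
  by (simp add: lin_def sum_distrib_left algebra_simps)

lemma lin_add: "lin m u (\<lambda>i. a i + b i) = lin m u a + lin m u b"
  by (simp add: lin_def distrib_left sum.distrib)

lemma lin_two_coordinates: assumes "a \<in> {1..m}" "b \<in> {1..m}" "a \<noteq> b"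
  shows "lin m (\<lambda>i. x * evec a i + y * evec b i) v = x * v a + y * v b"
proof -
  have "lin m (\<lambda>i. x * evec a i + y * evec b i) v =
      (\<Sum>i\<in>{1..m}. (if i = a then x * v i else 0) + (if i = b then y * v i else 0))"
    unfolding lin_def evec_def by (rule sum.cong) (auto simp: algebra_simps)
  also have "\<dots> = x * v a + y * v b" using assms by (simp add: sum.distrib sum.delta')
  finally show ?thesis .
qed

definition hpart :: "(zvec \<Rightarrow> int) \<Rightarrow> int \<Rightarrow> qt \<Rightarrow> qt" where
  "hpart \<psi> s f = (\<lambda>x. if \<psi> (fst x) = s then f x else 0)"

lemma supp_hpart_subset: "supp (hpart \<psi> s f) \<subseteq> supp f" by (auto simp: supp_def hpart_def)

lemma supp_hpart: "supp (hpart \<psi> s f) \<subseteq> {x. \<psi> (fst x) = s}" by (auto simp: supp_def hpart_def)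

lemma hpart_carrier[intro]: assumes "f \<in> qt_carrier m" shows "hpart \<psi> s f \<in> qt_carrier m"
proof (rule carrier_intro)
  show "finite (supp (hpart \<psi> s f))" using finite_subset[OF supp_hpart_subset carrier_finite[OF assms]] .
  fix x assume "hpart \<psi> s f x \<noteq> 0"
  thus "valid_vec m (fst x)" using carrier_valid[OF assms] by (simp add: hpart_def split: if_splits)
qed

lemma hpart_homogeneous: "supp f \<subseteq> {x. \<psi> (fst x) = s} \<Longrightarrow> hpart \<psi> t f = (if t = s then f else (\<lambda>x. 0))"
  by (auto simp: hpart_def supp_def fun_eq_iff)

lemma hpart_add: "hpart \<psi> s (\<lambda>x. f x + g x) = (\<lambda>x. hpart \<psi> s f x + hpart \<psi> s g x)"
  by (auto simp: hpart_def)

lemma hpart_neg: "hpart \<psi> s (\<lambda>x. - f x) = (\<lambda>x. - hpart \<psi> s f x)"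
  by (auto simp: hpart_def)

lemma hpart_sum: "hpart \<psi> s (\<lambda>x. \<Sum>j\<in>J. F j x) = (\<lambda>x. \<Sum>j\<in>J. hpart \<psi> s (F j) x)"
  by (auto simp: hpart_def)

lemma hpart_commute: "hpart \<psi> s (hpart \<phi> t f) = hpart \<phi> t (hpart \<psi> s f)" by (auto simp: hpart_def)

lemma supp_mult_degrees:
  assumes "finite (supp f)" "finite (supp g)" "additive \<psi>"
    "supp f \<subseteq> {x. P (\<psi> (fst x))}" "supp g \<subseteq> {x. Q (\<psi> (fst x))}"
  shows "supp (qt_mult m L f g) \<subseteq> {z. \<exists>a b. P a \<and> Q b \<and> \<psi> (fst z) = a + b}"
proof
  fix z assume "z \<in> supp (qt_mult m L f g)"
  hence "z \<in> (\<lambda>(x,y). qkey_mul m L x y) ` (supp f \<times> supp g)"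
    using supp_mult[of f g m L] assms by (meson subsetD)
  then obtain x y where xy: "x \<in> supp f" "y \<in> supp g" "z = qkey_mul m L x y" by auto
  hence "\<psi> (fst z) = \<psi> (fst x) + \<psi> (fst y)" using assms(3) by (simp add: additive_def)
  thus "z \<in> {z. \<exists>a b. P a \<and> Q b \<and> \<psi> (fst z) = a + b}" using xy assms(4,5) by blast
qed

lemma supp_mult_homogeneous:
  assumes "finite (supp f)" "finite (supp g)" "additive \<psi>"
    "supp f \<subseteq> {x. \<psi> (fst x) = a}" "supp g \<subseteq> {x. \<psi> (fst x) = b}"
  shows "supp (qt_mult m L f g) \<subseteq> {z. \<psi> (fst z) = a + b}"
  using supp_mult_degrees[OF assms(1-3), of "\<lambda>s. s = a" "\<lambda>s. s = b"] assms(4,5) by auto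

lemma supp_mult_degree_ge:
  assumes "finite (supp f)" "finite (supp g)" "additive \<psi>"
    "supp f \<subseteq> {x. \<psi> (fst x) \<ge> a}" "supp g \<subseteq> {x. \<psi> (fst x) \<ge> b}"
  shows "supp (qt_mult m L f g) \<subseteq> {z. \<psi> (fst z) \<ge> a + b}"
  using supp_mult_degrees[OF assms(1-3), of "\<lambda>s. s \<ge> a" "\<lambda>s. s \<ge> b"] assms(4,5) by force

lemma hpart_mult_homogeneous_left:
  assumes "finite (supp f)" "finite (supp g)" "additive \<psi>" "supp f \<subseteq> {x. \<psi> (fst x) = a}"
  shows "hpart \<psi> s (qt_mult m L f g) = qt_mult m L f (hpart \<psi> (s - a) g)"
proof (rule ext)
  fix z
  have cg: "finite (supp (hpart \<psi> (s - a) g))" using finite_subset[OF supp_hpart_subset assms(2)] .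
  show "hpart \<psi> s (qt_mult m L f g) z = qt_mult m L f (hpart \<psi> (s - a) g) z"
  proof (cases "\<psi> (fst z) = s")
    case True
    have "qt_mult m L f g z = (\<Sum>x\<in>supp f. f x * g (ldiv m L x z))"
      by (rule qt_mult_left[OF assms(1) order_refl assms(2)])
    also have "\<dots> = (\<Sum>x\<in>supp f. f x * hpart \<psi> (s - a) g (ldiv m L x z))"
    proof (rule sum.cong[OF refl])
      fix x assume "x \<in> supp f"
      hence "\<psi> (fst x) = a" using assms(4) by auto
      hence "\<psi> (fst (ldiv m L x z)) = s - a" using True additive_diff[OF assms(3)] by simp
      thus "f x * g (ldiv m L x z) = f x * hpart \<psi> (s - a) g (ldiv m L x z)" by (simp add: hpart_def)
    qed
    also have "\<dots> = qt_mult m L f (hpart \<psi> (s - a) g) z"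
      by (rule qt_mult_left[OF assms(1) order_refl cg, symmetric])
    finally show ?thesis using True by (simp add: hpart_def)
  next
    case False
    have "supp (qt_mult m L f (hpart \<psi> (s - a) g)) \<subseteq> {z. \<psi> (fst z) = a + (s - a)}"
      by (rule supp_mult_homogeneous[OF assms(1) cg assms(3,4) supp_hpart])
    hence "qt_mult m L f (hpart \<psi> (s - a) g) z = 0" using False by (auto simp: supp_def)
    thus ?thesis using False by (simp add: hpart_def)
  qed
qed

lemma hpart_mult_homogeneous_right:
  assumes "finite (supp f)" "finite (supp g)" "additive \<psi>" "supp g \<subseteq> {x. \<psi> (fst x) = b}"
  shows "hpart \<psi> s (qt_mult m L f g) = qt_mult m L (hpart \<psi> (s - b) f) g"
proof (rule ext)
  fix z
  have cf: "finite (supp (hpart \<psi> (s - b) f))" using finite_subset[OF supp_hpart_subset assms(1)] .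
  show "hpart \<psi> s (qt_mult m L f g) z = qt_mult m L (hpart \<psi> (s - b) f) g z"
  proof (cases "\<psi> (fst z) = s")
    case True
    have "qt_mult m L f g z = (\<Sum>y\<in>supp g. f (rdiv m L z y) * g y)"
      by (rule qt_mult_right[OF assms(1,2) order_refl])
    also have "\<dots> = (\<Sum>y\<in>supp g. hpart \<psi> (s - b) f (rdiv m L z y) * g y)"
    proof (rule sum.cong[OF refl])
      fix y assume "y \<in> supp g"
      hence "\<psi> (fst y) = b" using assms(4) by auto
      hence "\<psi> (fst (rdiv m L z y)) = s - b" using True additive_diff[OF assms(3)] by simp
      thus "f (rdiv m L z y) * g y = hpart \<psi> (s - b) f (rdiv m L z y) * g y" by (simp add: hpart_def)
    qed
    also have "\<dots> = qt_mult m L (hpart \<psi> (s - b) f) g z"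
      by (rule qt_mult_right[OF cf assms(2) order_refl, symmetric])
    finally show ?thesis using True by (simp add: hpart_def)
  next
    case False
    have "supp (qt_mult m L (hpart \<psi> (s - b) f) g) \<subseteq> {z. \<psi> (fst z) = (s - b) + b}"
      by (rule supp_mult_homogeneous[OF cf assms(2) assms(3) supp_hpart assms(4)])
    hence "qt_mult m L (hpart \<psi> (s - b) f) g z = 0" using False by (auto simp: supp_def)
    thus ?thesis using False by (simp add: hpart_def)
  qed
qed

lemma hpart_mult_lowest:
  assumes "finite (supp f)" "finite (supp g)" "additive \<psi>"
    "supp f \<subseteq> {x. \<psi> (fst x) \<ge> a}" "supp g \<subseteq> {x. \<psi> (fst x) \<ge> b}"
  shows "hpart \<psi> (a + b) (qt_mult m L f g) = qt_mult m L (hpart \<psi> a f) (hpart \<psi> b g)"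
proof (rule ext)
  fix z
  have cf: "finite (supp (hpart \<psi> a f))" using finite_subset[OF supp_hpart_subset assms(1)] .
  have cg: "finite (supp (hpart \<psi> b g))" using finite_subset[OF supp_hpart_subset assms(2)] .
  show "hpart \<psi> (a + b) (qt_mult m L f g) z = qt_mult m L (hpart \<psi> a f) (hpart \<psi> b g) z"
  proof (cases "\<psi> (fst z) = a + b")
    case True
    have "qt_mult m L f g z = (\<Sum>x\<in>supp f. f x * g (ldiv m L x z))"
      by (rule qt_mult_left[OF assms(1) order_refl assms(2)])
    also have "\<dots> = (\<Sum>x\<in>supp f. hpart \<psi> a f x * hpart \<psi> b g (ldiv m L x z))"
    proof (rule sum.cong[OF refl])
      fix x assume x: "x \<in> supp f"
      hence ge: "\<psi> (fst x) \<ge> a" using assms(4) by auto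
      have e: "\<psi> (fst (ldiv m L x z)) = a + b - \<psi> (fst x)" using True additive_diff[OF assms(3)] by simp
      show "f x * g (ldiv m L x z) = hpart \<psi> a f x * hpart \<psi> b g (ldiv m L x z)"
      proof (cases "\<psi> (fst x) = a")
        case True thus ?thesis using e by (simp add: hpart_def)
      next
        case False
        hence "\<psi> (fst (ldiv m L x z)) < b" using e ge by simp
        hence "g (ldiv m L x z) = 0" using assms(5) by (force simp: supp_def)
        thus ?thesis using False by (simp add: hpart_def)
      qed
    qed
    also have "\<dots> = qt_mult m L (hpart \<psi> a f) (hpart \<psi> b g) z"
      by (rule qt_mult_left[OF assms(1) supp_hpart_subset cg, symmetric])
    finally show ?thesis using True by (simp add: hpart_def)
  next
    case False
    have "supp (qt_mult m L (hpart \<psi> a f) (hpart \<psi> b g)) \<subseteq> {z. \<psi> (fst z) = a + b}"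
      by (rule supp_mult_homogeneous[OF cf cg assms(3) supp_hpart supp_hpart])
    hence "qt_mult m L (hpart \<psi> a f) (hpart \<psi> b g) z = 0" using False by (auto simp: supp_def)
    thus ?thesis using False by (simp add: hpart_def)
  qed
qed

lemma lowest_degree:
  fixes \<psi> :: "zvec \<Rightarrow> int"
  assumes "finite (supp f)" and "supp f \<noteq> {}"
  obtains \<sigma> where "\<sigma> \<in> (\<lambda>x. \<psi> (fst x)) ` supp f" and "supp f \<subseteq> {x. \<psi> (fst x) \<ge> \<sigma>}"
proof
  let ?S = "(\<lambda>x. \<psi> (fst x)) ` supp f"
  have fS: "finite ?S" using assms(1) by simp
  show "Min ?S \<in> ?S" using fS assms(2) by (intro Min_in) simp_all
  show "supp f \<subseteq> {x. \<psi> (fst x) \<ge> Min ?S}"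
  proof
    fix x assume "x \<in> supp f"
    hence "Min ?S \<le> \<psi> (fst x)" using Min_le[OF fS] by blast
    thus "x \<in> {x. \<psi> (fst x) \<ge> Min ?S}" by simp
  qed
qed

lemma lowest_degree_survives_mult:
  assumes ad: "additive \<psi>" and Qc: "Q \<in> qt_carrier m" and Qs: "supp Q \<subseteq> {x. \<psi> (fst x) \<ge> a}"
    and Ql: "hpart \<psi> a Q = qmon c k" and gc: "g \<in> qt_carrier m" and g: "supp g \<noteq> {}"
  shows "\<exists>z\<in>supp (qt_mult m L Q g). \<exists>x\<in>supp g. \<psi> (fst z) = a + \<psi> (fst x)"
proof -
  obtain \<sigma> where \<sigma>: "\<sigma> \<in> (\<lambda>x. \<psi> (fst x)) ` supp g" and gs: "supp g \<subseteq> {x. \<psi> (fst x) \<ge> \<sigma>}"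
    using lowest_degree[OF carrier_finite[OF gc] g] by blast
  then obtain x0 where x0: "x0 \<in> supp g" "\<psi> (fst x0) = \<sigma>" by auto
  have low: "hpart \<psi> (a + \<sigma>) (qt_mult m L Q g) = qt_mult m L (qmon c k) (hpart \<psi> \<sigma> g)"
    using hpart_mult_lowest[OF carrier_finite[OF Qc] carrier_finite[OF gc] ad Qs gs] Ql by simp
  have "hpart \<psi> \<sigma> g x0 \<noteq> 0" using x0 by (simp add: hpart_def supp_def)
  hence "hpart \<psi> \<sigma> g \<noteq> (\<lambda>x. 0)" by auto
  hence "qt_mult m L (qmon c k) (hpart \<psi> \<sigma> g) \<noteq> (\<lambda>x. 0)"
    by (rule qmon_mult_nonzero[OF carrier_finite[OF hpart_carrier[OF gc]]])
  then obtain z where "hpart \<psi> (a + \<sigma>) (qt_mult m L Q g) z \<noteq> 0" unfolding low by (auto simp: fun_eq_iff)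
  hence "z \<in> supp (qt_mult m L Q g)" "\<psi> (fst z) = a + \<psi> (fst x0)"
    using x0(2) by (auto simp: hpart_def supp_def split: if_splits)
  thus ?thesis using x0(1) by blast
qed

lemma sum_hparts: assumes "finite (supp f)"
  shows "f = (\<lambda>x. \<Sum>a\<in>(\<lambda>x. \<psi> (fst x)) ` supp f. hpart \<psi> a f x)"
proof (rule ext)
  fix x
  have "(\<Sum>a\<in>(\<lambda>x. \<psi> (fst x)) ` supp f. hpart \<psi> a f x) =
      (\<Sum>a\<in>(\<lambda>x. \<psi> (fst x)) ` supp f. if a = \<psi> (fst x) then f x else 0)"
    by (intro sum.cong refl) (auto simp: hpart_def)
  also have "\<dots> = f x" using assms by (auto simp: sum.delta' supp_def)
  finally show "f x = (\<Sum>a\<in>(\<lambda>x. \<psi> (fst x)) ` supp f. hpart \<psi> a f x)" ..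
qed

lemma supp_pow_degree_ge:
  assumes ad: "additive \<psi>" and M_carrier: "M \<in> qt_carrier m" and M_degree: "supp M \<subseteq> {x. \<psi> (fst x) \<ge> s}"
  shows "supp (qt_pow m L M K) \<subseteq> {x. \<psi> (fst x) \<ge> int K * s}"
proof (induction K)
  case 0
  have "\<psi> (\<lambda>i. 0) = 0" by (rule additive_zero[OF ad])
  thus ?case by auto
next
  case (Suc K)
  have "supp (qt_mult m L (qt_pow m L M K) M) \<subseteq> {z. \<psi> (fst z) \<ge> int K * s + s}"
    by (rule supp_mult_degree_ge[OF carrier_finite[OF qt_pow_carrier[OF M_carrier]] carrier_finite[OF M_carrier] ad Suc M_degree])
  thus ?case by (simp add: algebra_simps)
qed

lemma supp_pow_homogeneous:
  assumes ad: "additive \<psi>" and M_carrier: "M \<in> qt_carrier m" and M_degree: "supp M \<subseteq> {x. \<psi> (fst x) = s}"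
  shows "supp (qt_pow m L M K) \<subseteq> {x. \<psi> (fst x) = int K * s}"
proof (induction K)
  case 0
  have "\<psi> (\<lambda>i. 0) = 0" by (rule additive_zero[OF ad])
  thus ?case by simp
next
  case (Suc K)
  have "supp (qt_mult m L (qt_pow m L M K) M) \<subseteq> {z. \<psi> (fst z) = int K * s + s}"
    by (rule supp_mult_homogeneous[OF carrier_finite[OF qt_pow_carrier[OF M_carrier]] carrier_finite[OF M_carrier] ad Suc M_degree])
  thus ?case by (simp add: algebra_simps)
qed

lemma hpart_pow_lowest:
  assumes ad: "additive \<psi>" and M_carrier: "M \<in> qt_carrier m" and M_degree: "supp M \<subseteq> {x. \<psi> (fst x) \<ge> s}"
  shows "hpart \<psi> (int K * s) (qt_pow m L M K) = qt_pow m L (hpart \<psi> s M) K"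
proof (induction K)
  case 0
  have "\<psi> (\<lambda>i. 0) = 0" by (rule additive_zero[OF ad])
  thus ?case using hpart_homogeneous[of "qmon (\<lambda>i. 0) 0" \<psi> 0 0] by simp
next
  case (Suc K)
  have "hpart \<psi> (int K * s + s) (qt_mult m L (qt_pow m L M K) M) =
      qt_mult m L (hpart \<psi> (int K * s) (qt_pow m L M K)) (hpart \<psi> s M)"
    by (rule hpart_mult_lowest[OF carrier_finite[OF qt_pow_carrier[OF M_carrier]] carrier_finite[OF M_carrier] ad
          supp_pow_degree_ge[OF ad M_carrier M_degree] M_degree])
  thus ?case using Suc by (simp add: algebra_simps)
qed

section \<open>Twisted commutation\<close>

text \<open>In \<open>q\<close>-notation \<open>twist w (X(c)) = q\<^bsup>\<Lambda>(c,w)\<^esup> X(c)\<close>: this is the factor picked up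
  when \<open>X(c)\<close> is moved past an element all of whose exponents \<open>v\<close> satisfy \<open>\<Lambda>(c,v) = \<Lambda>(c,w)\<close>.\<close>

definition twist :: "nat \<Rightarrow> (nat \<Rightarrow> nat \<Rightarrow> int) \<Rightarrow> zvec \<Rightarrow> qt \<Rightarrow> qt" where
  "twist m L w g = (\<lambda>x. g (fst x, snd x - 2 * lam_form m L (fst x) w))"

definition twist_key :: "nat \<Rightarrow> (nat \<Rightarrow> nat \<Rightarrow> int) \<Rightarrow> zvec \<Rightarrow> qkey \<Rightarrow> qkey" where
  "twist_key m L w x = (fst x, snd x + 2 * lam_form m L (fst x) w)"

lemma inj_twist_key: "inj (twist_key m L w)"
  by (rule injI) (auto simp: twist_key_def prod_eq_iff)

lemma supp_twist: "supp (twist m L w g) = twist_key m L w ` supp g"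
proof
  show "supp (twist m L w g) \<subseteq> twist_key m L w ` supp g"
  proof
    fix y assume "y \<in> supp (twist m L w g)"
    hence "(fst y, snd y - 2 * lam_form m L (fst y) w) \<in> supp g" by (simp add: supp_def twist_def)
    moreover have "y = twist_key m L w (fst y, snd y - 2 * lam_form m L (fst y) w)" by (simp add: twist_key_def)
    ultimately show "y \<in> twist_key m L w ` supp g" by blast
  qed
  show "twist_key m L w ` supp g \<subseteq> supp (twist m L w g)"
    by (auto simp: supp_def twist_def twist_key_def)
qed

lemma twist_twist_key: "twist m L w g (twist_key m L w x) = g x" by (simp add: twist_def twist_key_def)

lemma fst_supp_twist: "y \<in> supp (twist m L w g) \<Longrightarrow> \<exists>x\<in>supp g. fst x = fst y"
  by (force simp: supp_twist twist_key_def)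

lemma twist_carrier[intro]: assumes "g \<in> qt_carrier m" shows "twist m L w g \<in> qt_carrier m"
proof (rule carrier_intro)
  show "finite (supp (twist m L w g))" using carrier_finite[OF assms] by (simp add: supp_twist)
  fix x assume "twist m L w g x \<noteq> 0"
  thus "valid_vec m (fst x)" using carrier_valid[OF assms] by (auto simp: twist_def)
qed

lemma rdiv_twist_key:
  assumes "skew_form m L" and "lam_form m L (fst x) (\<lambda>i. fst z i - fst x i) = lam_form m L (fst x) w"
  shows "rdiv m L z (twist_key m L w x) = ldiv m L x z"
  using lam_skew[OF assms(1), of "\<lambda>i. fst z i - fst x i" "fst x"] assms(2)
  by (simp add: rdiv_def ldiv_def twist_key_def)

lemma mult_eq_mult_twist:
  assumes sk: "skew_form m L" and fg: "finite (supp g)" and fM: "finite (supp M)"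
    and cond: "\<And>x y. x \<in> supp g \<Longrightarrow> y \<in> supp M \<Longrightarrow> lam_form m L (fst x) (fst y) = lam_form m L (fst x) w"
  shows "qt_mult m L g M = qt_mult m L M (twist m L w g)"
proof (rule ext)
  fix z
  have fT: "finite (twist_key m L w ` supp g)" using fg by simp
  have "qt_mult m L M (twist m L w g) z = (\<Sum>y\<in>twist_key m L w ` supp g. M (rdiv m L z y) * twist m L w g y)"
    by (rule qt_mult_right[OF fM fT]) (simp add: supp_twist)
  also have "\<dots> = (\<Sum>x\<in>supp g. M (rdiv m L z (twist_key m L w x)) * g x)"
    by (subst sum.reindex) (auto intro: inj_on_subset[OF inj_twist_key] simp: twist_twist_key)
  also have "\<dots> = (\<Sum>x\<in>supp g. g x * M (ldiv m L x z))"
  proof (rule sum.cong[OF refl])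
    fix x assume x: "x \<in> supp g"
    show "M (rdiv m L z (twist_key m L w x)) * g x = g x * M (ldiv m L x z)"
    proof (cases "ldiv m L x z \<in> supp M \<or> rdiv m L z (twist_key m L w x) \<in> supp M")
      case True
      have "\<exists>y\<in>supp M. fst y = (\<lambda>i. fst z i - fst x i)"
        using True
      proof
        assume "ldiv m L x z \<in> supp M" thus ?thesis by (intro bexI[of _ "ldiv m L x z"]) auto
      next
        assume "rdiv m L z (twist_key m L w x) \<in> supp M"
        thus ?thesis by (intro bexI[of _ "rdiv m L z (twist_key m L w x)"]) (auto simp: twist_key_def)
      qed
      then obtain y where y: "y \<in> supp M" "fst y = (\<lambda>i. fst z i - fst x i)" by blast
      have "rdiv m L z (twist_key m L w x) = ldiv m L x z"
        using rdiv_twist_key[OF sk] cond[OF x y(1)] y(2) by simp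
      thus ?thesis by simp
    next
      case False thus ?thesis by (simp add: supp_def)
    qed
  qed
  also have "\<dots> = qt_mult m L g M z"
    by (rule qt_mult_left[OF fg order_refl fM, symmetric])
  finally show "qt_mult m L g M z = qt_mult m L M (twist m L w g) z" ..
qed

lemma gen_carrier:
  assumes "H \<subseteq> qt_carrier m" "f \<in> generate_ring (qt_ring m L) H"
  shows "f \<in> qt_carrier m"
  using ring.generate_ring_in_carrier[OF qt_ring_ring, of H m L] assms by simp

lemma gen_zero: "(\<lambda>x. 0) \<in> generate_ring (qt_ring m L) H"
  using ring.zero_in_generate[OF qt_ring_ring, of m L H] by simp

lemma gen_one: "qmon (\<lambda>i. 0) 0 \<in> generate_ring (qt_ring m L) H"
  using generate_ring.one[of "qt_ring m L" H] by simp

lemma gen_incl: "h \<in> H \<Longrightarrow> h \<in> generate_ring (qt_ring m L) H"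
  by (rule generate_ring.incl)

lemma gen_add: "f \<in> generate_ring (qt_ring m L) H \<Longrightarrow> g \<in> generate_ring (qt_ring m L) H \<Longrightarrow>
  (\<lambda>x. f x + g x) \<in> generate_ring (qt_ring m L) H"
  using generate_ring.eng_add[of f "qt_ring m L" H g] by simp

lemma gen_mult: "f \<in> generate_ring (qt_ring m L) H \<Longrightarrow> g \<in> generate_ring (qt_ring m L) H \<Longrightarrow>
  qt_mult m L f g \<in> generate_ring (qt_ring m L) H"
  using generate_ring.eng_mult[of f "qt_ring m L" H g] by simp

lemma gen_neg: "H \<subseteq> qt_carrier m \<Longrightarrow> f \<in> generate_ring (qt_ring m L) H \<Longrightarrow>
  (\<lambda>x. - f x) \<in> generate_ring (qt_ring m L) H"
  using generate_ring.a_inv[of f "qt_ring m L" H] qt_a_inv gen_carrier by metis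

lemma gen_sum: "finite S \<Longrightarrow> (\<And>s. s \<in> S \<Longrightarrow> F s \<in> generate_ring (qt_ring m L) H) \<Longrightarrow>
  (\<lambda>x. \<Sum>s\<in>S. F s x) \<in> generate_ring (qt_ring m L) H"
proof (induction S rule: finite_induct)
  case empty thus ?case using gen_zero by simp
next
  case (insert a S)
  thus ?case using gen_add[of "F a" m L H "\<lambda>x. \<Sum>s\<in>S. F s x"] by simp
qed

lemma gen_pow: "f \<in> generate_ring (qt_ring m L) H \<Longrightarrow> qt_pow m L f n \<in> generate_ring (qt_ring m L) H"
  by (induction n) (auto intro: gen_mult gen_one)

lemma gen_scale_nat: "f \<in> generate_ring (qt_ring m L) H \<Longrightarrow>
  (\<lambda>x. of_nat n * f x) \<in> generate_ring (qt_ring m L) H"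
proof (induction n)
  case 0 thus ?case using gen_zero by simp
next
  case (Suc n)
  thus ?case using gen_add[of f m L H "\<lambda>x. of_nat n * f x"] by (simp add: algebra_simps)
qed

lemma gen_scale: "H \<subseteq> qt_carrier m \<Longrightarrow> f \<in> generate_ring (qt_ring m L) H \<Longrightarrow>
  (\<lambda>x. n * f x) \<in> generate_ring (qt_ring m L) H"
proof (cases "n \<ge> 0")
  case True
  assume "f \<in> generate_ring (qt_ring m L) H"
  thus ?thesis using gen_scale_nat[of f m L H "nat n"] True by simp
next
  case False
  assume H: "H \<subseteq> qt_carrier m" "f \<in> generate_ring (qt_ring m L) H"
  have "(\<lambda>x. of_nat (nat (- n)) * f x) \<in> generate_ring (qt_ring m L) H" by (rule gen_scale_nat[OF H(2)])
  from gen_neg[OF H(1) this] show ?thesis using False by simp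
qed

lemma Xv_int_power_in_generate_ring:
  assumes sk: "skew_form m L" and v: "Xv v \<in> generate_ring (qt_ring m L) H"
    and v': "n < 0 \<Longrightarrow> Xv (\<lambda>i. - v i) \<in> generate_ring (qt_ring m L) H"
  shows "Xv (\<lambda>i. n * v i) \<in> generate_ring (qt_ring m L) H"
proof (cases "n \<ge> 0")
  case True
  have "qt_pow m L (Xv v) (nat n) = Xv (\<lambda>i. n * v i)"
    using True by (simp add: Xv_def qt_pow_qmon[OF sk])
  thus ?thesis using gen_pow[OF v, of "nat n"] by simp
next
  case False
  have "qt_pow m L (Xv (\<lambda>i. - v i)) (nat (- n)) = Xv (\<lambda>i. n * v i)"
    using False by (simp add: Xv_def qt_pow_qmon[OF sk])
  thus ?thesis using gen_pow[OF v', of "nat (- n)"] False by simp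
qed

lemma sum_monomials: "f \<in> qt_carrier m \<Longrightarrow> f = (\<lambda>z. \<Sum>x\<in>supp f. f x * qmon (fst x) (snd x) z)"
proof (rule ext)
  fix z assume f: "f \<in> qt_carrier m"
  have "(\<Sum>x\<in>supp f. f x * qmon (fst x) (snd x) z) = (\<Sum>x\<in>supp f. if x = z then f x else 0)"
    by (intro sum.cong refl) (auto simp: qmon_def)
  also have "\<dots> = f z" using carrier_finite[OF f] by (simp add: sum.delta' supp_def)
  finally show "f z = (\<Sum>x\<in>supp f. f x * qmon (fst x) (snd x) z)" ..
qed

lemma generate_ring_if_monomials:
  assumes H: "H \<subseteq> qt_carrier m" and f: "f \<in> qt_carrier m"
    and q: "\<And>x. x \<in> supp f \<Longrightarrow> qmon (fst x) (snd x) \<in> generate_ring (qt_ring m L) H"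
  shows "f \<in> generate_ring (qt_ring m L) H"
proof -
  have "(\<lambda>z. \<Sum>x\<in>supp f. f x * qmon (fst x) (snd x) z) \<in> generate_ring (qt_ring m L) H"
    by (rule gen_sum[OF carrier_finite[OF f]]) (rule gen_scale[OF H q])
  thus ?thesis using sum_monomials[OF f] by simp
qed

lemma generate_ring_mono: assumes "H \<subseteq> generate_ring R H'" shows "generate_ring R H \<subseteq> generate_ring R H'"
proof
  fix x assume "x \<in> generate_ring R H"
  thus "x \<in> generate_ring R H'"
    by (induction rule: generate_ring.induct) (use assms in \<open>auto intro: generate_ring.intros\<close>)
qed

section \<open>Lower parts divisible by powers of a normalizing element\<close>

definition deg0 :: "nat \<Rightarrow> nat \<Rightarrow> qt set" where
  "deg0 m i = {g \<in> qt_carrier m. supp g \<subseteq> {x. fst x i = 0}}"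

definition divisible_part :: "nat \<Rightarrow> (nat \<Rightarrow> nat \<Rightarrow> int) \<Rightarrow> nat \<Rightarrow> qt \<Rightarrow> int \<Rightarrow> qt \<Rightarrow> bool" where
  "divisible_part m L i M a h \<longleftrightarrow> h \<in> qt_carrier m \<and> supp h \<subseteq> {x. fst x i = a} \<and>
     (a < 0 \<longrightarrow> (\<exists>g\<in>deg0 m i. h = qt_mult m L (qt_pow m L M (nat (-a))) g))"

text \<open>For \<open>M = X\<^sub>i'\<close> this is the ring \<open>C\<^sub>i\<close> of the argument.\<close>

definition lower_divisible :: "nat \<Rightarrow> (nat \<Rightarrow> nat \<Rightarrow> int) \<Rightarrow> nat \<Rightarrow> qt \<Rightarrow> qt set" where
  "lower_divisible m L i M = {f \<in> qt_carrier m. \<forall>a<0. \<exists>g\<in>deg0 m i.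
       hpart (\<lambda>c. c i) a f = qt_mult m L (qt_pow m L M (nat (-a))) g}"

lemma deg0_mult: "g \<in> deg0 m i \<Longrightarrow> g' \<in> deg0 m i \<Longrightarrow> qt_mult m L g g' \<in> deg0 m i"
  unfolding deg0_def using supp_mult_homogeneous[OF _ _ additive_coordinate, of g g' i 0 0 m L]
  by (auto intro: mult_carrier carrier_finite)

lemma zero_deg0: "(\<lambda>x. 0) \<in> deg0 m i" by (simp add: deg0_def supp_def)

lemma one_deg0: "qmon (\<lambda>i. 0) 0 \<in> deg0 m i" by (auto simp: deg0_def)

locale normalizing_element =
  fixes m :: nat and L :: "nat \<Rightarrow> nat \<Rightarrow> int" and i :: nat and M :: qt
  assumes M_carrier: "M \<in> qt_carrier m" and M_degree: "supp M \<subseteq> {x. fst x i = -1}"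
    and M_normalizes: "\<And>g. g \<in> deg0 m i \<Longrightarrow> \<exists>g'\<in>deg0 m i. qt_mult m L g M = qt_mult m L M g'"

begin

abbreviation "Mp k \<equiv> qt_pow m L M k"

lemma Mp_carrier: "Mp k \<in> qt_carrier m" using M_carrier by auto

lemma supp_Mp: "supp (Mp k) \<subseteq> {x. fst x i = - int k}"
proof (induction k)
  case 0 show ?case by (simp add: supp_def qmon_def)
next
  case (Suc k)
  have "supp (qt_mult m L (Mp k) M) \<subseteq> {x. fst x i = - int k + -1}"
    by (rule supp_mult_homogeneous[OF carrier_finite[OF Mp_carrier] carrier_finite[OF M_carrier] additive_coordinate Suc M_degree])
  moreover have e: "- int k + -1 = - int (Suc k)" by simp
  ultimately have "supp (qt_mult m L (Mp k) M) \<subseteq> {x. fst x i = - int (Suc k)}" by (simp only: e)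
  thus ?case by simp
qed

lemma Mp_add: "Mp (a + b) = qt_mult m L (Mp a) (Mp b)" using qt_pow_add[OF M_carrier] .

lemma deg0_mult_Mp: "g \<in> deg0 m i \<Longrightarrow> \<exists>g'\<in>deg0 m i. qt_mult m L g (Mp k) = qt_mult m L (Mp k) g'"
proof (induction k arbitrary: g)
  case 0
  thus ?case using qt_mult_one_left qt_mult_one_right carrier_finite unfolding deg0_def
    by (metis (no_types, lifting) mem_Collect_eq qt_pow.simps(1))
next
  case (Suc k)
  obtain g1 where g1: "g1 \<in> deg0 m i" "qt_mult m L g (Mp k) = qt_mult m L (Mp k) g1" using Suc by blast
  obtain g2 where g2: "g2 \<in> deg0 m i" "qt_mult m L g1 M = qt_mult m L M g2" using M_normalizes[OF g1(1)] by blast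
  have gc: "g \<in> qt_carrier m" "g1 \<in> qt_carrier m" "g2 \<in> qt_carrier m" using Suc.prems g1 g2 by (auto simp: deg0_def)
  have "qt_mult m L g (Mp (Suc k)) = qt_mult m L (qt_mult m L g (Mp k)) M"
    using qt_mult_assoc_carrier[OF gc(1) Mp_carrier M_carrier] by simp
  also have "\<dots> = qt_mult m L (Mp k) (qt_mult m L g1 M)" using g1(2) qt_mult_assoc_carrier[OF Mp_carrier gc(2) M_carrier] by simp
  also have "\<dots> = qt_mult m L (Mp (Suc k)) g2" using g2(2) qt_mult_assoc_carrier[OF Mp_carrier M_carrier gc(3)] by simp
  finally show ?case using g2(1) by blast
qed

lemma divisible_part_nonneg: "h \<in> qt_carrier m \<Longrightarrow> supp h \<subseteq> {x. fst x i = a} \<Longrightarrow> a \<ge> 0 \<Longrightarrow> divisible_part m L i M a h"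
  by (simp add: divisible_part_def)

lemma divisible_part_zero: "divisible_part m L i M a (\<lambda>x. 0)"
  unfolding divisible_part_def using zero_deg0[of m i] by (force simp: supp_def)

lemma divisible_part_add: "divisible_part m L i M a h \<Longrightarrow> divisible_part m L i M a h' \<Longrightarrow> divisible_part m L i M a (\<lambda>x. h x + h' x)"
proof -
  assume g: "divisible_part m L i M a h" "divisible_part m L i M a h'"
  have c: "(\<lambda>x. h x + h' x) \<in> qt_carrier m" using g by (auto simp: divisible_part_def)
  have s: "supp (\<lambda>x. h x + h' x) \<subseteq> {x. fst x i = a}"
    using supp_add_subset[of h _ h'] g unfolding divisible_part_def by blast
  show ?thesis
  proof (cases "a < 0")
    case True
    then obtain g1 g2 where g12: "g1 \<in> deg0 m i" "h = qt_mult m L (Mp (nat (-a))) g1"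
      "g2 \<in> deg0 m i" "h' = qt_mult m L (Mp (nat (-a))) g2" using g unfolding divisible_part_def by blast
    have g12c: "g1 \<in> qt_carrier m" "g2 \<in> qt_carrier m" using g12 by (auto simp: deg0_def)
    have "(\<lambda>x. h x + h' x) = qt_mult m L (Mp (nat (-a))) (\<lambda>x. g1 x + g2 x)"
      using g12 by (simp add: qt_mult_add_right[OF carrier_finite[OF g12c(1)] carrier_finite[OF g12c(2)]
          carrier_finite[OF Mp_carrier]])
    moreover have "(\<lambda>x. g1 x + g2 x) \<in> deg0 m i"
      using g12 g12c supp_add_subset[of g1 "{x. fst x i = 0}" g2] by (auto simp: deg0_def)
    ultimately show ?thesis using c s by (auto simp: divisible_part_def)
  qed (use c s in \<open>simp add: divisible_part_def\<close>)
qed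

lemma divisible_part_neg: "divisible_part m L i M a h \<Longrightarrow> divisible_part m L i M a (\<lambda>x. - h x)"
proof -
  assume g: "divisible_part m L i M a h"
  have c: "(\<lambda>x. - h x) \<in> qt_carrier m" using g by (auto simp: divisible_part_def)
  have s: "supp (\<lambda>x. - h x) \<subseteq> {x. fst x i = a}"
    using supp_neg_subset[of h] g unfolding divisible_part_def by blast
  show ?thesis
  proof (cases "a < 0")
    case True
    then obtain g1 where g1: "g1 \<in> deg0 m i" "h = qt_mult m L (Mp (nat (-a))) g1"
      using g unfolding divisible_part_def by blast
    have g1c: "g1 \<in> qt_carrier m" using g1 by (auto simp: deg0_def)
    have "(\<lambda>x. - h x) = qt_mult m L (Mp (nat (-a))) (\<lambda>x. - g1 x)"
      using g1 by (simp add: mult_neg_right[OF carrier_finite[OF Mp_carrier] carrier_finite[OF g1c]])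
    moreover have "(\<lambda>x. - g1 x) \<in> deg0 m i" using g1 by (auto simp: deg0_def supp_def)
    ultimately show ?thesis using c s by (auto simp: divisible_part_def)
  qed (use c s in \<open>simp add: divisible_part_def\<close>)
qed

lemma divisible_part_sum: "finite S \<Longrightarrow> (\<And>s. s \<in> S \<Longrightarrow> divisible_part m L i M a (F s)) \<Longrightarrow>
  divisible_part m L i M a (\<lambda>x. \<Sum>s\<in>S. F s x)"
proof (induction S rule: finite_induct)
  case empty thus ?case using divisible_part_zero by simp
next
  case (insert b S)
  thus ?case using divisible_part_add[of a "F b" "\<lambda>x. \<Sum>s\<in>S. F s x"] by simp
qed

lemma Mp_deg0_mult_Mp_deg0:
  assumes g: "g \<in> deg0 m i" and g': "g' \<in> deg0 m i"
  shows "\<exists>g''\<in>deg0 m i. qt_mult m L (qt_mult m L (Mp k) g) (qt_mult m L (Mp l) g') = qt_mult m L (Mp (k + l)) g''"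
proof -
  have gc: "g \<in> qt_carrier m" "g' \<in> qt_carrier m" using g g' by (auto simp: deg0_def)
  obtain g'' where g'': "g'' \<in> deg0 m i" "qt_mult m L g (Mp l) = qt_mult m L (Mp l) g''"
    using deg0_mult_Mp[OF g] by blast
  have g''c: "g'' \<in> qt_carrier m" using g'' by (simp add: deg0_def)
  have "qt_mult m L (qt_mult m L (Mp k) g) (qt_mult m L (Mp l) g') = qt_mult m L (Mp k) (qt_mult m L (qt_mult m L g (Mp l)) g')"
    using qt_mult_assoc_carrier[OF Mp_carrier gc(1) mult_carrier[OF Mp_carrier gc(2)]]
      qt_mult_assoc_carrier[OF gc(1) Mp_carrier gc(2)] by simp
  also have "\<dots> = qt_mult m L (Mp (k + l)) (qt_mult m L g'' g')"
    using g''(2) Mp_add qt_mult_assoc_carrier[OF Mp_carrier g''c gc(2)]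
      qt_mult_assoc_carrier[OF Mp_carrier Mp_carrier mult_carrier[OF g''c gc(2)]] by simp
  finally show ?thesis using deg0_mult[OF g''(1) g'] by blast
qed

lemma Mp_deg0_mult_nonneg:
  assumes g: "g \<in> deg0 m i" and hc: "h \<in> qt_carrier m" and hs: "supp h \<subseteq> {x. fst x i = int b}"
    and bk: "b \<le> k"
  shows "\<exists>g'\<in>deg0 m i. qt_mult m L (qt_mult m L (Mp k) g) h = qt_mult m L (Mp (k - b)) g'"
proof -
  have gc: "g \<in> qt_carrier m" using g by (simp add: deg0_def)
  let ?g' = "qt_mult m L (Mp b) (qt_mult m L g h)"
  have gh: "qt_mult m L g h \<in> qt_carrier m" by (rule mult_carrier[OF gc hc])
  have "supp (qt_mult m L g h) \<subseteq> {x. fst x i = 0 + int b}"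
    using supp_mult_homogeneous[OF carrier_finite[OF gc] carrier_finite[OF hc] additive_coordinate, of i 0 "int b" m L]
      g hs by (auto simp: deg0_def)
  hence "supp ?g' \<subseteq> {x. fst x i = - int b + (0 + int b)}"
    by (rule supp_mult_homogeneous[OF carrier_finite[OF Mp_carrier] carrier_finite[OF gh] additive_coordinate supp_Mp])
  hence g': "?g' \<in> deg0 m i" using mult_carrier[OF Mp_carrier gh] by (simp add: deg0_def)
  have "qt_mult m L (qt_mult m L (Mp k) g) h = qt_mult m L (Mp (k - b + b)) (qt_mult m L g h)"
    using qt_mult_assoc_carrier[OF Mp_carrier gc hc] bk by simp
  also have "\<dots> = qt_mult m L (Mp (k - b)) ?g'"
    using Mp_add qt_mult_assoc_carrier[OF Mp_carrier Mp_carrier gh] by simp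
  finally show ?thesis using g' by blast
qed

lemma nonneg_mult_Mp_deg0:
  assumes hc: "h \<in> qt_carrier m" and hs: "supp h \<subseteq> {x. fst x i = int a}" and g: "g \<in> deg0 m i"
    and al: "a \<le> l"
  shows "\<exists>g'\<in>deg0 m i. qt_mult m L h (qt_mult m L (Mp l) g) = qt_mult m L (Mp (l - a)) g'"
proof -
  have gc: "g \<in> qt_carrier m" using g by (simp add: deg0_def)
  let ?p = "qt_mult m L h (Mp a)"
  have pc: "?p \<in> qt_carrier m" by (rule mult_carrier[OF hc Mp_carrier])
  have "supp ?p \<subseteq> {x. fst x i = int a + - int a}"
    by (rule supp_mult_homogeneous[OF carrier_finite[OF hc] carrier_finite[OF Mp_carrier] additive_coordinate hs supp_Mp])
  hence p: "?p \<in> deg0 m i" using pc by (simp add: deg0_def)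
  obtain p' where p': "p' \<in> deg0 m i" "qt_mult m L ?p (Mp (l - a)) = qt_mult m L (Mp (l - a)) p'"
    using deg0_mult_Mp[OF p] by blast
  have p'c: "p' \<in> qt_carrier m" using p' by (simp add: deg0_def)
  have "qt_mult m L h (qt_mult m L (Mp l) g) = qt_mult m L (qt_mult m L h (Mp (a + (l - a)))) g"
    using qt_mult_assoc_carrier[OF hc Mp_carrier gc] al by simp
  also have "qt_mult m L h (Mp (a + (l - a))) = qt_mult m L ?p (Mp (l - a))"
    using Mp_add qt_mult_assoc_carrier[OF hc Mp_carrier Mp_carrier] by simp
  also have "qt_mult m L \<dots> g = qt_mult m L (Mp (l - a)) (qt_mult m L p' g)"
    using p'(2) qt_mult_assoc_carrier[OF Mp_carrier p'c gc] by simp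
  finally show ?thesis using deg0_mult[OF p'(1) g] by blast
qed

lemma divisible_part_mult:
  assumes ga: "divisible_part m L i M a h" and gb: "divisible_part m L i M b h'"
  shows "divisible_part m L i M (a + b) (qt_mult m L h h')"
proof -
  have hc: "h \<in> qt_carrier m" "h' \<in> qt_carrier m"
    and hs: "supp h \<subseteq> {x. fst x i = a}" "supp h' \<subseteq> {x. fst x i = b}"
    using ga gb by (auto simp: divisible_part_def)
  have s: "supp (qt_mult m L h h') \<subseteq> {x. fst x i = a + b}"
    by (rule supp_mult_homogeneous[OF carrier_finite[OF hc(1)] carrier_finite[OF hc(2)] additive_coordinate hs])
  have "\<exists>g\<in>deg0 m i. qt_mult m L h h' = qt_mult m L (Mp (nat (- (a + b)))) g" if neg: "a + b < 0"
  proof -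
    consider "a < 0" "b < 0" | "a < 0" "b \<ge> 0" | "a \<ge> 0" "b < 0" using neg by linarith
    thus ?thesis
    proof cases
      case 1
      then obtain g g' where "g \<in> deg0 m i" "h = qt_mult m L (Mp (nat (-a))) g"
        "g' \<in> deg0 m i" "h' = qt_mult m L (Mp (nat (-b))) g'" using ga gb by (auto simp: divisible_part_def)
      thus ?thesis using Mp_deg0_mult_Mp_deg0[of g g' "nat (-a)" "nat (-b)"] 1
        by (simp add: nat_add_distrib[symmetric])
    next
      case 2
      then obtain g where "g \<in> deg0 m i" "h = qt_mult m L (Mp (nat (-a))) g"
        using ga by (auto simp: divisible_part_def)
      thus ?thesis using Mp_deg0_mult_nonneg[of g h' "nat b" "nat (-a)"] hc(2) hs(2) 2 neg
        by (simp add: nat_diff_distrib)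
    next
      case 3
      then obtain g' where "g' \<in> deg0 m i" "h' = qt_mult m L (Mp (nat (-b))) g'"
        using gb by (auto simp: divisible_part_def)
      moreover have "nat (-b) - nat a = nat (- (a + b))" using 3 neg by simp
      ultimately show ?thesis using nonneg_mult_Mp_deg0[of h "nat a" g' "nat (-b)"] hc(1) hs(1) 3 neg
        by simp
    qed
  qed
  thus ?thesis using mult_carrier[OF hc] s by (simp add: divisible_part_def)
qed

lemma lower_divisible_iff_parts: "f \<in> lower_divisible m L i M \<longleftrightarrow> f \<in> qt_carrier m \<and> (\<forall>a. divisible_part m L i M a (hpart (\<lambda>c. c i) a f))"
proof
  assume f: "f \<in> lower_divisible m L i M"
  hence fc: "f \<in> qt_carrier m" by (simp add: lower_divisible_def)
  show "f \<in> qt_carrier m \<and> (\<forall>a. divisible_part m L i M a (hpart (\<lambda>c. c i) a f))"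
    using f fc supp_hpart[of "\<lambda>c. c i" _ f] unfolding divisible_part_def lower_divisible_def by auto
next
  assume "f \<in> qt_carrier m \<and> (\<forall>a. divisible_part m L i M a (hpart (\<lambda>c. c i) a f))"
  thus "f \<in> lower_divisible m L i M" unfolding divisible_part_def lower_divisible_def by auto
qed

lemma lower_divisible_mult: assumes f: "f \<in> lower_divisible m L i M" and g: "g \<in> lower_divisible m L i M"
  shows "qt_mult m L f g \<in> lower_divisible m L i M"
proof -
  have fc: "f \<in> qt_carrier m" and gc: "g \<in> qt_carrier m" using f g by (auto simp: lower_divisible_def)
  define A where "A = (\<lambda>x. fst x i) ` supp f"
  define B where "B = (\<lambda>x. fst x i) ` supp g"
  have A: "finite A" and B: "finite B" using carrier_finite fc gc by (auto simp: A_def B_def)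
  let ?c = "hpart (\<lambda>c. c i)"
  have cfin: "\<And>a h. h \<in> qt_carrier m \<Longrightarrow> finite (supp (?c a h))" by (auto intro: carrier_finite)
  have fd: "f = (\<lambda>x. \<Sum>a\<in>A. ?c a f x)" unfolding A_def by (rule sum_hparts[OF carrier_finite[OF fc]])
  have gd: "g = (\<lambda>x. \<Sum>b\<in>B. ?c b g x)" unfolding B_def by (rule sum_hparts[OF carrier_finite[OF gc]])
  have prod: "qt_mult m L f g = (\<lambda>x. \<Sum>a\<in>A. \<Sum>b\<in>B. qt_mult m L (?c a f) (?c b g) x)"
  proof -
    have "qt_mult m L f g = (\<lambda>x. \<Sum>a\<in>A. qt_mult m L (?c a f) g x)"
      by (subst fd, rule mult_sum_left[OF carrier_finite[OF gc] A cfin[OF fc]])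
    also have "\<dots> = (\<lambda>x. \<Sum>a\<in>A. \<Sum>b\<in>B. qt_mult m L (?c a f) (?c b g) x)"
      by (subst gd, subst mult_sum_right[OF cfin[OF fc] B cfin[OF gc]]) simp
    finally show ?thesis .
  qed
  have "divisible_part m L i M s (?c s (qt_mult m L f g))" for s
  proof -
    have "?c s (qt_mult m L f g) = (\<lambda>x. \<Sum>a\<in>A. \<Sum>b\<in>B. ?c s (qt_mult m L (?c a f) (?c b g)) x)"
      by (subst prod) (simp add: hpart_sum)
    moreover have "divisible_part m L i M s (\<lambda>x. \<Sum>a\<in>A. \<Sum>b\<in>B. ?c s (qt_mult m L (?c a f) (?c b g)) x)"
    proof (intro divisible_part_sum A B)
      fix a b
      have ga: "divisible_part m L i M a (?c a f)" and gb: "divisible_part m L i M b (?c b g)" using f g by (auto simp: lower_divisible_iff_parts)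
      have sp: "supp (qt_mult m L (?c a f) (?c b g)) \<subseteq> {x. fst x i = a + b}"
        by (rule supp_mult_homogeneous[OF cfin[OF fc] cfin[OF gc] additive_coordinate supp_hpart supp_hpart])
      show "divisible_part m L i M s (?c s (qt_mult m L (?c a f) (?c b g)))"
      proof (cases "s = a + b")
        case True thus ?thesis using hpart_homogeneous[OF sp] divisible_part_mult[OF ga gb] by simp
      next
        case False thus ?thesis using hpart_homogeneous[OF sp] divisible_part_zero by simp
      qed
    qed
    ultimately show ?thesis by simp
  qed
  thus ?thesis using mult_carrier[OF fc gc] by (simp add: lower_divisible_iff_parts)
qed

lemma lower_divisible_add: "f \<in> lower_divisible m L i M \<Longrightarrow> g \<in> lower_divisible m L i M \<Longrightarrow> (\<lambda>x. f x + g x) \<in> lower_divisible m L i M"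
  by (auto simp: lower_divisible_iff_parts hpart_add intro: divisible_part_add)

lemma lower_divisible_neg: "f \<in> lower_divisible m L i M \<Longrightarrow> (\<lambda>x. - f x) \<in> lower_divisible m L i M"
  by (auto simp: lower_divisible_iff_parts hpart_neg intro: divisible_part_neg)

lemma lower_divisible_nonneg: assumes "f \<in> qt_carrier m" "supp f \<subseteq> {x. fst x i \<ge> 0}"
  shows "f \<in> lower_divisible m L i M"
proof -
  have "divisible_part m L i M a (hpart (\<lambda>c. c i) a f)" for a
  proof (cases "a < 0")
    case True
    have "hpart (\<lambda>c. c i) a f = (\<lambda>x. 0)" using assms(2) True by (auto simp: hpart_def supp_def fun_eq_iff)
    thus ?thesis using divisible_part_zero by simp
  next
    case False thus ?thesis by (intro divisible_part_nonneg[OF hpart_carrier[OF assms(1)] supp_hpart]) simp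
  qed
  thus ?thesis using assms by (simp add: lower_divisible_iff_parts)
qed

lemma generator_lower_divisible: "M \<in> lower_divisible m L i M"
proof -
  have "divisible_part m L i M a (hpart (\<lambda>c. c i) a M)" for a
  proof (cases "a = -1")
    case True
    have "hpart (\<lambda>c. c i) a M = M" using hpart_homogeneous[OF M_degree] True by simp
    moreover have "M = qt_mult m L (Mp (nat (- a))) (qmon (\<lambda>i. 0) 0)"
      using True qt_mult_one_right carrier_finite[OF M_carrier] qt_mult_one_left by simp
    ultimately show ?thesis using M_carrier M_degree True one_deg0 by (auto simp: divisible_part_def)
  next
    case False
    thus ?thesis using hpart_homogeneous[OF M_degree] divisible_part_zero by simp
  qed
  thus ?thesis using M_carrier by (simp add: lower_divisible_iff_parts)
qed

lemma generate_ring_lower_divisible: assumes "H \<subseteq> lower_divisible m L i M" "H \<subseteq> qt_carrier m"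
  shows "generate_ring (qt_ring m L) H \<subseteq> lower_divisible m L i M"
proof
  fix f assume "f \<in> generate_ring (qt_ring m L) H"
  thus "f \<in> lower_divisible m L i M"
  proof (induction rule: generate_ring.induct)
    case one
    have "qmon (\<lambda>i. 0) 0 \<in> lower_divisible m L i M" by (rule lower_divisible_nonneg) auto
    thus ?case by simp
  next
    case (incl h) thus ?case using assms by auto
  next
    case (a_inv h)
    have "h \<in> qt_carrier m" using a_inv.IH by (simp add: lower_divisible_def)
    thus ?case using lower_divisible_neg[OF a_inv.IH] qt_a_inv by simp
  next
    case (eng_add h1 h2) thus ?case using lower_divisible_add by simp
  next
    case (eng_mult h1 h2) thus ?case using lower_divisible_mult by simp
  qed
qed

end

section \<open>Left division\<close>

context
  fixes m :: nat and L :: "nat \<Rightarrow> nat \<Rightarrow> int" and \<psi> :: "zvec \<Rightarrow> int"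
    and P Q :: qt and sP sQ e :: int and u :: zvec
  assumes sk: "skew_form m L" and ad: "additive \<psi>"
    and Pc: "P \<in> qt_carrier m" and Ps: "supp P \<subseteq> {x. \<psi> (fst x) \<ge> sP}"
    and Pl: "hpart \<psi> sP P = qmon u e"
    and Qc: "Q \<in> qt_carrier m" and Qs: "supp Q \<subseteq> {x. \<psi> (fst x) = sQ}"
    and unit_mult_Q: "\<exists>F\<in>qt_carrier m. qt_mult m L (qmon (\<lambda>i. - u i) (- e)) Q = qt_mult m L Q F"
    and P_mult_Q: "\<exists>P'\<in>qt_carrier m. qt_mult m L P Q = qt_mult m L Q P'"
begin

lemma lowest_part_left_divisible:
  assumes Gc: "G \<in> qt_carrier m" and Hc: "H \<in> qt_carrier m"
    and eq: "qt_mult m L P G = qt_mult m L Q H" and Gs: "supp G \<subseteq> {x. \<psi> (fst x) \<ge> \<sigma>}"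
  shows "\<exists>\<kappa>\<in>qt_carrier m. hpart \<psi> \<sigma> G = qt_mult m L Q \<kappa>"
proof -
  obtain F where F: "F \<in> qt_carrier m" "qt_mult m L (qmon (\<lambda>i. - u i) (- e)) Q = qt_mult m L Q F"
    using unit_mult_Q by blast
  define G0 where "G0 = hpart \<psi> \<sigma> G"
  define H0 where "H0 = hpart \<psi> (sP + \<sigma> - sQ) H"
  have G0c: "G0 \<in> qt_carrier m" unfolding G0_def using Gc by (rule hpart_carrier)
  have H0c: "H0 \<in> qt_carrier m" unfolding H0_def using Hc by (rule hpart_carrier)
  have "hpart \<psi> (sP + \<sigma>) (qt_mult m L P G) = qt_mult m L (qmon u e) G0"
    using hpart_mult_lowest[OF carrier_finite[OF Pc] carrier_finite[OF Gc] ad Ps Gs] Pl by (simp add: G0_def)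
  moreover have "hpart \<psi> (sP + \<sigma>) (qt_mult m L Q H) = qt_mult m L Q H0"
    using hpart_mult_homogeneous_left[OF carrier_finite[OF Qc] carrier_finite[OF Hc] ad Qs] by (simp add: H0_def)
  ultimately have lowest: "qt_mult m L (qmon u e) G0 = qt_mult m L Q H0" using eq by simp
  have "(u, e) \<in> supp (hpart \<psi> sP P)" using Pl by simp
  hence "P (u, e) \<noteq> 0" by (auto simp: supp_def hpart_def split: if_splits)
  hence "valid_vec m u" using carrier_valid[OF Pc] by force
  hence uc: "qmon (\<lambda>i. - u i) (- e) \<in> qt_carrier m" by (auto simp: valid_vec_def intro!: qmon_carrier)
  have "G0 = qt_mult m L (qmon (\<lambda>i. - u i) (- e)) (qt_mult m L (qmon u e) G0)"
    using qmon_inv_mult_cancel[OF sk carrier_finite[OF G0c]] by simp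
  also have "\<dots> = qt_mult m L (qt_mult m L Q F) H0"
    using lowest qt_mult_assoc_carrier[OF uc Qc H0c, of L] F(2) by simp
  also have "\<dots> = qt_mult m L Q (qt_mult m L F H0)" by (rule qt_mult_assoc_carrier[OF Qc F(1) H0c])
  finally show ?thesis using mult_carrier[OF F(1) H0c] unfolding G0_def by blast
qed

lemma left_divides_if_mult_eq:
  "G \<in> qt_carrier m \<Longrightarrow> H \<in> qt_carrier m \<Longrightarrow> qt_mult m L P G = qt_mult m L Q H \<Longrightarrow>
     \<exists>\<kappa>\<in>qt_carrier m. G = qt_mult m L Q \<kappa>"
proof (induction "card ((\<lambda>x. \<psi> (fst x)) ` supp G)" arbitrary: G H rule: less_induct)
  case less
  note Gc = less.prems(1) and Hc = less.prems(2) and eq = less.prems(3)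
  let ?S = "(\<lambda>x. \<psi> (fst x)) ` supp G"
  show ?case
  proof (cases "supp G = {}")
    case True
    hence "G = (\<lambda>x. 0)" by (rule supp_empty_zero)
    thus ?thesis by (intro bexI[of _ "\<lambda>x. 0"]) auto
  next
    case False
    have fS: "finite ?S" using carrier_finite[OF Gc] by simp
    obtain \<sigma> where \<sigma>S: "\<sigma> \<in> ?S" and Gs: "supp G \<subseteq> {x. \<psi> (fst x) \<ge> \<sigma>}"
      using lowest_degree[OF carrier_finite[OF Gc] False] by blast
    obtain \<kappa>0 where k0: "\<kappa>0 \<in> qt_carrier m" "hpart \<psi> \<sigma> G = qt_mult m L Q \<kappa>0"
      using lowest_part_left_divisible[OF Gc Hc eq Gs] by blast
    obtain P' where P': "P' \<in> qt_carrier m" "qt_mult m L P Q = qt_mult m L Q P'" using P_mult_Q by blast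
    define G1 where "G1 = (\<lambda>x. G x - hpart \<psi> \<sigma> G x)"
    define H1 where "H1 = (\<lambda>x. H x - qt_mult m L P' \<kappa>0 x)"
    have G1c: "G1 \<in> qt_carrier m" unfolding G1_def
      using add_carrier[OF Gc neg_carrier[OF hpart_carrier[OF Gc]]] by simp
    have H1c: "H1 \<in> qt_carrier m" unfolding H1_def
      using add_carrier[OF Hc neg_carrier[OF mult_carrier[OF P'(1) k0(1)]]] by simp
    have "qt_mult m L P (hpart \<psi> \<sigma> G) = qt_mult m L Q (qt_mult m L P' \<kappa>0)"
      using k0(2) qt_mult_assoc_carrier[OF Pc Qc k0(1), of L] P'(2) qt_mult_assoc_carrier[OF Qc P'(1) k0(1), of L]
      by simp
    hence eq1: "qt_mult m L P G1 = qt_mult m L Q H1"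
      unfolding G1_def H1_def using eq
      by (simp add: mult_diff_right[OF carrier_finite[OF Pc] carrier_finite[OF Gc] carrier_finite[OF hpart_carrier[OF Gc]]]
          mult_diff_right[OF carrier_finite[OF Qc] carrier_finite[OF Hc] carrier_finite[OF mult_carrier[OF P'(1) k0(1)]]])
    have sub: "(\<lambda>x. \<psi> (fst x)) ` supp G1 \<subseteq> ?S - {\<sigma>}"
    proof
      fix t assume "t \<in> (\<lambda>x. \<psi> (fst x)) ` supp G1"
      then obtain x where x: "x \<in> supp G1" "t = \<psi> (fst x)" by auto
      hence "G x \<noteq> 0 \<and> \<psi> (fst x) \<noteq> \<sigma>" by (auto simp: G1_def hpart_def supp_def split: if_splits)
      thus "t \<in> ?S - {\<sigma>}" using x by (auto simp: supp_def)
    qed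
    have "card ((\<lambda>x. \<psi> (fst x)) ` supp G1) < card ?S"
      by (rule le_less_trans[OF card_mono[OF _ sub] card_Diff1_less[OF fS \<sigma>S]]) (use fS in auto)
    then obtain \<kappa>1 where k1: "\<kappa>1 \<in> qt_carrier m" "G1 = qt_mult m L Q \<kappa>1"
      using less.hyps[OF _ G1c H1c eq1] by blast
    have "G = (\<lambda>x. G1 x + hpart \<psi> \<sigma> G x)" by (simp add: G1_def)
    also have "\<dots> = qt_mult m L Q (\<lambda>x. \<kappa>1 x + \<kappa>0 x)"
      using k1 k0 qt_mult_add_right[OF carrier_finite[OF k1(1)] carrier_finite[OF k0(1)] carrier_finite[OF Qc]]
      by simp
    finally show ?thesis using k1(1) k0(1) by blast
  qed
qed

end

lemma base_ring_carrier: "f \<in> base_ring m \<Longrightarrow> f \<in> qt_carrier m" by (simp add: base_ring_def)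

lemma base_ring_supp: "f \<in> base_ring m \<Longrightarrow> supp f \<subseteq> {x. fst x = (\<lambda>i. 0)}"
  by (auto simp: base_ring_def supp_def)

lemma supp_Xv_mult:
  assumes "f \<in> base_ring m"
  shows "supp (qt_mult m L f (Xv c)) \<subseteq> {x. fst x = c}"
proof -
  have "supp (qt_mult m L f (Xv c)) \<subseteq> (\<lambda>(x,y). qkey_mul m L x y) ` (supp f \<times> supp (Xv c))"
    by (rule supp_mult) (use carrier_finite base_ring_carrier assms in \<open>auto simp: Xv_def\<close>)
  show ?thesis
  proof
    fix x assume "x \<in> supp (qt_mult m L f (Xv c))"
    hence "x \<in> (\<lambda>(x,y). qkey_mul m L x y) ` (supp f \<times> supp (Xv c))"
      using \<open>supp (qt_mult m L f (Xv c)) \<subseteq> _\<close> by (meson subsetD)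
    then obtain p q where pq: "p \<in> supp f" "q \<in> supp (Xv c)" "x = qkey_mul m L p q"
      by auto
    have "fst p = (\<lambda>i. 0)" using pq(1) base_ring_supp[OF assms] by auto
    moreover have "q = (c, 0)" using pq(2) by (simp add: Xv_def)
    ultimately show "x \<in> {x. fst x = c}" using pq(3) by simp
  qed
qed

lemma ZP_carrier: "ZP m n \<subseteq> qt_carrier m" by (auto simp: ZP_def)

lemma base_ring_subset_ZP: "base_ring m \<subseteq> ZP m 2"
  by (auto simp: base_ring_def ZP_def)

lemma ZP_supp: "f \<in> ZP m 2 \<Longrightarrow> supp f \<subseteq> {x. fst x 1 = 0 \<and> fst x 2 = 0}"
  by (auto simp: ZP_def supp_def)

lemma ZP_I: "f \<in> qt_carrier m \<Longrightarrow> supp f \<subseteq> {x. fst x 1 = 0 \<and> fst x 2 = 0} \<Longrightarrow> f \<in> ZP m 2"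
  unfolding ZP_def supp_def by (auto simp: le_Suc_eq numeral_2_eq_2)

lemma qmon_ZP: "valid_vec m c \<Longrightarrow> c 1 = 0 \<Longrightarrow> c 2 = 0 \<Longrightarrow> qmon c k \<in> ZP m 2"
  by (rule ZP_I) auto

section \<open>Rank two seeds\<close>

locale rank2_seed =
  fixes m :: nat and L B :: "nat \<Rightarrow> nat \<Rightarrow> int" and d :: "nat \<Rightarrow> int" and h :: "nat \<Rightarrow> nat \<Rightarrow> qt"
  assumes m2: "m \<ge> 2" and cp: "compatible_pair m 2 L B" and sd: "seed_data m 2 B d h"
begin

lemma L_skew: "skew_form m L" using cp unfolding compatible_pair_def skew_form_def by blast

lemma compatibility: obtains dt :: "nat \<Rightarrow> int" where "\<And>k. k \<in> {1..2} \<Longrightarrow> dt k > 0"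
  "\<And>i k. i \<in> {1..m} \<Longrightarrow> k \<in> {1..2} \<Longrightarrow> (\<Sum>j\<in>{1..m}. L i j * B j k) = (if i = k then - dt k else 0)"
  using cp unfolding compatible_pair_def by blast

abbreviation "bt k \<equiv> beta m B d k"

lemma d_pos: "k \<in> {1..2} \<Longrightarrow> d k > 0" using sd by (simp add: seed_data_def)

lemma d_dvd: "k \<in> {1..2} \<Longrightarrow> j \<in> {1..m} \<Longrightarrow> d k dvd B j k" using sd by (simp add: seed_data_def)

lemma d_mult_beta: "k \<in> {1..2} \<Longrightarrow> j \<in> {1..m} \<Longrightarrow> d k * bt k j = B j k"
  using d_dvd by (simp add: beta_def)

lemma beta_out_of_range: "j \<notin> {1..m} \<Longrightarrow> bt k j = 0" by (auto simp: beta_def)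

lemma lam_evec_beta: assumes k: "k \<in> {1..2}" and a: "a \<in> {1..m}"
  shows "(a \<noteq> k \<longrightarrow> lam_form m L (evec a) (bt k) = 0) \<and> lam_form m L (evec k) (bt k) \<noteq> 0"
proof -
  obtain dt where dt: "\<And>k. k \<in> {1..2} \<Longrightarrow> dt k > 0"
    "\<And>i k. i \<in> {1..m} \<Longrightarrow> k \<in> {1..2} \<Longrightarrow> (\<Sum>j\<in>{1..m}. L i j * B j k) = (if i = k then - dt k else 0)"
    using compatibility by blast
  have km: "k \<in> {1..m}" using k m2 by auto
  have e: "d k * lam_form m L (evec i) (bt k) = (if i = k then - dt k else 0)" if i: "i \<in> {1..m}" for i
  proof -
    have "d k * lam_form m L (evec i) (bt k) = (\<Sum>j\<in>{1..m}. L i j * (d k * bt k j))"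
      using i by (simp add: lam_evec_left sum_distrib_left algebra_simps)
    also have "\<dots> = (\<Sum>j\<in>{1..m}. L i j * B j k)" using d_mult_beta[OF k] by simp
    also have "\<dots> = (if i = k then - dt k else 0)" using dt(2)[OF i k] .
    finally show ?thesis .
  qed
  show ?thesis using e[OF a] d_pos[OF k] e[OF km] dt(1)[OF k] by auto
qed

lemma lam_evec_beta_own: "k \<in> {1..2} \<Longrightarrow> lam_form m L (evec k) (bt k) \<noteq> 0"
  using lam_evec_beta[of k 1] m2 by auto

lemma lam_beta: assumes k: "k \<in> {1..2}"
  shows "lam_form m L c (bt k) = c k * lam_form m L (evec k) (bt k)"
proof -
  have km: "k \<in> {1..m}" using k m2 by auto
  have "lam_form m L c (bt k) = (\<Sum>a\<in>{1..m}. if a = k then c a * lam_form m L (evec a) (bt k) else 0)"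
  proof (subst lam_sum_left, rule sum.cong[OF refl])
    fix a assume a: "a \<in> {1..m}"
    show "c a * lam_form m L (evec a) (bt k) = (if a = k then c a * lam_form m L (evec a) (bt k) else 0)"
      using lam_evec_beta[OF k a] by auto
  qed
  also have "\<dots> = c k * lam_form m L (evec k) (bt k)" using km by (simp add: sum.delta')
  finally show ?thesis .
qed

lemma B_skew_relation: assumes k: "k \<in> {1..2}" and l: "l \<in> {1..2}"
  obtains dt where "dt k > 0" "dt l > 0" "B l k * dt l = - (B k l * dt k)"
proof -
  obtain dt where dt: "\<And>k. k \<in> {1..2} \<Longrightarrow> dt k > 0"
    "\<And>i k. i \<in> {1..m} \<Longrightarrow> k \<in> {1..2} \<Longrightarrow> (\<Sum>j\<in>{1..m}. L i j * B j k) = (if i = k then - dt k else 0)"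
    using compatibility by blast
  have km: "k \<in> {1..m}" "l \<in> {1..m}" using k l m2 by auto
  have sk: "L a j = - L j a" if "a \<in> {1..m}" "j \<in> {1..m}" for a j
    using L_skew that unfolding skew_form_def by blast
  have "(\<Sum>a\<in>{1..m}. \<Sum>j\<in>{1..m}. B a k * L a j * B j l) = (\<Sum>a\<in>{1..m}. B a k * (\<Sum>j\<in>{1..m}. L a j * B j l))"
    by (simp add: sum_distrib_left mult.assoc)
  also have "\<dots> = (\<Sum>a\<in>{1..m}. B a k * (if a = l then - dt l else 0))"
  proof (rule sum.cong[OF refl])
    fix a assume "a \<in> {1..m}" thus "B a k * (\<Sum>j\<in>{1..m}. L a j * B j l) = B a k * (if a = l then - dt l else 0)"
      using dt(2)[OF _ l] by simp
  qed
  also have "\<dots> = - (B l k * dt l)" using km by (simp add: if_distrib sum.delta' cong: if_cong)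
  finally have e1: "(\<Sum>a\<in>{1..m}. \<Sum>j\<in>{1..m}. B a k * L a j * B j l) = - (B l k * dt l)" .
  have "(\<Sum>a\<in>{1..m}. \<Sum>j\<in>{1..m}. B a k * L a j * B j l) = (\<Sum>j\<in>{1..m}. \<Sum>a\<in>{1..m}. B a k * L a j * B j l)"
    by (rule sum.swap)
  also have "\<dots> = (\<Sum>j\<in>{1..m}. - (B j l * (\<Sum>a\<in>{1..m}. L j a * B a k)))"
  proof (rule sum.cong[OF refl])
    fix j assume j: "j \<in> {1..m}"
    have "(\<Sum>a\<in>{1..m}. B a k * L a j * B j l) = (\<Sum>a\<in>{1..m}. - (B j l * (L j a * B a k)))"
    proof (rule sum.cong[OF refl])
      fix a assume a: "a \<in> {1..m}"
      show "B a k * L a j * B j l = - (B j l * (L j a * B a k))" using sk[OF a j] by simp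
    qed
    also have "\<dots> = - (B j l * (\<Sum>a\<in>{1..m}. L j a * B a k))" by (simp add: sum_distrib_left sum_negf)
    finally show "(\<Sum>a\<in>{1..m}. B a k * L a j * B j l) = - (B j l * (\<Sum>a\<in>{1..m}. L j a * B a k))" .
  qed
  also have "\<dots> = (\<Sum>j\<in>{1..m}. - (B j l * (if j = k then - dt k else 0)))"
  proof (rule sum.cong[OF refl])
    fix a assume "a \<in> {1..m}" thus "- (B a l * (\<Sum>j\<in>{1..m}. L a j * B j k)) = - (B a l * (if a = k then - dt k else 0))"
      using dt(2)[OF _ k] by simp
  qed
  also have "\<dots> = B k l * dt k" using km by (simp add: if_distrib sum.delta' cong: if_cong)
  finally show ?thesis using that dt(1)[OF k] dt(1)[OF l] e1 by simp
qed

lemma B_diag: "k \<in> {1..2} \<Longrightarrow> B k k = 0"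
  by (rule B_skew_relation[of k k]) auto

lemma B_offdiag_zero_iff: "B 2 1 = 0 \<longleftrightarrow> B 1 2 = 0"
  by (rule B_skew_relation[of 1 2]) auto

lemma beta_own: "k \<in> {1..2} \<Longrightarrow> bt k k = 0"
  using B_diag m2 by (simp add: beta_def)

lemma beta_offdiag_zero_iff: "bt 1 2 = 0 \<longleftrightarrow> bt 2 1 = 0"
proof -
  have "bt 1 2 = 0 \<longleftrightarrow> B 2 1 = 0" using d_mult_beta[of 1 2] d_pos[of 1] m2 by auto
  moreover have "bt 2 1 = 0 \<longleftrightarrow> B 1 2 = 0" using d_mult_beta[of 2 1] d_pos[of 2] m2 by auto
  ultimately show ?thesis using B_offdiag_zero_iff by simp
qed

abbreviation "dd k \<equiv> nat (d k)"

definition exch_base :: "nat \<Rightarrow> zvec" where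
  "exch_base k = (\<lambda>j. d k * pos_part (\<lambda>l. - bt k l) j - evec k j)"

definition exch_exp :: "nat \<Rightarrow> nat \<Rightarrow> zvec" where
  "exch_exp k r = (\<lambda>j. int r * pos_part (bt k) j + (d k - int r) * pos_part (\<lambda>l. - bt k l) j - evec k j)"

abbreviation "mu k \<equiv> mut_var m L B d h k"

lemma mu_eq_sum: "mu k = (\<lambda>x. \<Sum>r\<in>{0..dd k}. qt_mult m L (h k r) (Xv (exch_exp k r)) x)"
  by (simp add: mut_var_def exch_exp_def)

lemma exch_exp_eq: "exch_exp k r = (\<lambda>j. exch_base k j + int r * bt k j)"
  by (rule ext) (simp add: exch_exp_def exch_base_def pos_part_def algebra_simps max_def)

lemma index_in_range: "k \<in> {1..2} \<Longrightarrow> k \<in> {1..m}" using m2 by auto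

lemma exch_exp_valid: "k \<in> {1..2} \<Longrightarrow> valid_vec m (exch_exp k r)"
  using index_in_range[of k] by (auto simp: valid_vec_def exch_exp_def pos_part_def beta_out_of_range evec_def)

lemma exch_exp_own: "k \<in> {1..2} \<Longrightarrow> exch_exp k r k = -1"
  using beta_own[of k] by (simp add: exch_exp_def pos_part_def evec_def)

lemma exch_exp_other_nonneg: "k \<in> {1..2} \<Longrightarrow> j \<noteq> k \<Longrightarrow> r \<le> dd k \<Longrightarrow> exch_exp k r j \<ge> 0"
  using d_pos[of k] by (auto simp: exch_exp_def pos_part_def evec_def intro!: add_nonneg_nonneg mult_nonneg_nonneg)

lemma h_base: assumes "k \<in> {1..2}" "r \<le> dd k" shows "h k r \<in> base_ring m"
proof -
  have "r \<in> {0..nat (d k)}" using assms by simp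
  thus ?thesis using sd assms(1) unfolding seed_data_def by blast
qed

lemma h_first: "k \<in> {1..2} \<Longrightarrow> h k 0 = qmon (\<lambda>i. 0) 0"
  using sd unfolding seed_data_def by blast

lemma h_last: "k \<in> {1..2} \<Longrightarrow> h k (dd k) = qmon (\<lambda>i. 0) 0"
  using sd unfolding seed_data_def by blast

lemma exch_term_carrier: "k \<in> {1..2} \<Longrightarrow> r \<le> dd k \<Longrightarrow> qt_mult m L (h k r) (Xv (exch_exp k r)) \<in> qt_carrier m"
  unfolding Xv_def by (rule mult_carrier[OF base_ring_carrier[OF h_base] qmon_carrier[OF exch_exp_valid]])

lemma supp_exch_term: "k \<in> {1..2} \<Longrightarrow> r \<le> dd k \<Longrightarrow> supp (qt_mult m L (h k r) (Xv (exch_exp k r))) \<subseteq> {x. fst x = exch_exp k r}"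
  by (rule supp_Xv_mult[OF h_base])

lemma mu_carrier: "k \<in> {1..2} \<Longrightarrow> mu k \<in> qt_carrier m"
  unfolding mu_eq_sum by (rule sum_carrier) (auto intro: exch_term_carrier)

lemma supp_mu: assumes k: "k \<in> {1..2}" shows "supp (mu k) \<subseteq> {x. \<exists>r\<in>{0..dd k}. fst x = exch_exp k r}"
proof
  fix x assume "x \<in> supp (mu k)"
  hence "(\<Sum>r\<in>{0..dd k}. qt_mult m L (h k r) (Xv (exch_exp k r)) x) \<noteq> 0" by (simp add: mu_eq_sum supp_def)
  then obtain r where r: "r \<in> {0..dd k}" "qt_mult m L (h k r) (Xv (exch_exp k r)) x \<noteq> 0" by (meson sum.neutral)
  hence "fst x = exch_exp k r" using supp_exch_term[OF k, of r] by (auto simp: supp_def)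
  thus "x \<in> {x. \<exists>r\<in>{0..dd k}. fst x = exch_exp k r}" using r by auto
qed

lemma supp_mu_own_degree: "k \<in> {1..2} \<Longrightarrow> supp (mu k) \<subseteq> {x. fst x k = -1}"
  using supp_mu[of k] exch_exp_own[of k] by auto

lemma supp_mu_other_degree: "k \<in> {1..2} \<Longrightarrow> j \<noteq> k \<Longrightarrow> supp (mu k) \<subseteq> {x. fst x j \<ge> 0}"
  using supp_mu[of k] exch_exp_other_nonneg[of k j] by fastforce

lemma deg0_mult_mu: assumes k: "k \<in> {1..2}" and g: "g \<in> deg0 m k"
  shows "qt_mult m L g (mu k) = qt_mult m L (mu k) (twist m L (exch_base k) g)"
proof (rule mult_eq_mult_twist[OF L_skew])
  show "finite (supp g)" using g by (auto simp: deg0_def intro: carrier_finite)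
  show "finite (supp (mu k))" using mu_carrier[OF k] by (rule carrier_finite)
  fix x y assume x: "x \<in> supp g" and y: "y \<in> supp (mu k)"
  have xk: "fst x k = 0" using g x by (auto simp: deg0_def)
  obtain r where "fst y = exch_exp k r" using supp_mu[OF k] y by auto
  hence "fst y = (\<lambda>j. exch_base k j + int r * bt k j)" by (simp add: exch_exp_eq)
  thus "lam_form m L (fst x) (fst y) = lam_form m L (fst x) (exch_base k)"
    using lam_beta[OF k, of "fst x"] xk by (simp add: lam_add_right lam_smul_right)
qed

lemma twist_deg0: "g \<in> deg0 m k \<Longrightarrow> twist m L w g \<in> deg0 m k"
  unfolding deg0_def using fst_supp_twist by (fastforce intro: twist_carrier)

lemma mu_normalizing: assumes k: "k \<in> {1..2}" shows "normalizing_element m L k (mu k)"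
proof
  show "mu k \<in> qt_carrier m" using mu_carrier[OF k] .
  show "supp (mu k) \<subseteq> {x. fst x k = -1}" using supp_mu_own_degree[OF k] .
  fix g assume "g \<in> deg0 m k"
  thus "\<exists>g'\<in>deg0 m k. qt_mult m L g (mu k) = qt_mult m L (mu k) g'"
    using deg0_mult_mu[OF k] twist_deg0 by blast
qed

lemma hpart_exch_term: assumes k: "k \<in> {1..2}" and r: "r \<le> dd k"
  shows "hpart \<psi> s (qt_mult m L (h k r) (Xv (exch_exp k r))) =
    (if \<psi> (exch_exp k r) = s then qt_mult m L (h k r) (Xv (exch_exp k r)) else (\<lambda>x. 0))"
proof -
  have "supp (qt_mult m L (h k r) (Xv (exch_exp k r))) \<subseteq> {x. \<psi> (fst x) = \<psi> (exch_exp k r)}"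
    using supp_exch_term[OF k r] by auto
  from hpart_homogeneous[OF this] show ?thesis by auto
qed

lemma mu_lowest_part:
  assumes k: "k \<in> {1..2}" and r': "r' = 0 \<or> r' = dd k"
    and gt: "\<And>r. r \<le> dd k \<Longrightarrow> r \<noteq> r' \<Longrightarrow> \<psi> (exch_exp k r) > \<psi> (exch_exp k r')"
  shows "supp (mu k) \<subseteq> {x. \<psi> (fst x) \<ge> \<psi> (exch_exp k r')}"
    and "hpart \<psi> (\<psi> (exch_exp k r')) (mu k) = Xv (exch_exp k r')"
proof -
  show "supp (mu k) \<subseteq> {x. \<psi> (fst x) \<ge> \<psi> (exch_exp k r')}"
  proof
    fix x assume "x \<in> supp (mu k)"
    then obtain r where "r \<in> {0..dd k}" "fst x = exch_exp k r" using supp_mu[OF k] by auto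
    thus "x \<in> {x. \<psi> (fst x) \<ge> \<psi> (exch_exp k r')}" using gt[of r] by (cases "r = r'") auto
  qed
  have r0D: "r' \<in> {0..dd k}" using r' by auto
  have "hpart \<psi> (\<psi> (exch_exp k r')) (mu k) =
      (\<lambda>x. \<Sum>r\<in>{0..dd k}. hpart \<psi> (\<psi> (exch_exp k r')) (qt_mult m L (h k r) (Xv (exch_exp k r))) x)"
    by (simp add: mu_eq_sum hpart_sum)
  also have "\<dots> = (\<lambda>x. \<Sum>r\<in>{0..dd k}. if r = r' then qt_mult m L (h k r) (Xv (exch_exp k r)) x else 0)"
  proof (rule ext, rule sum.cong[OF refl])
    fix x r assume r: "r \<in> {0..dd k}"
    show "hpart \<psi> (\<psi> (exch_exp k r')) (qt_mult m L (h k r) (Xv (exch_exp k r))) x =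
       (if r = r' then qt_mult m L (h k r) (Xv (exch_exp k r)) x else 0)"
      using hpart_exch_term[OF k, of r \<psi> "\<psi> (exch_exp k r')"] r gt[of r] by (cases "r = r'") auto
  qed
  also have "\<dots> = qt_mult m L (h k r') (Xv (exch_exp k r'))" using r0D by (simp add: sum.delta')
  also have "h k r' = qmon (\<lambda>i. 0) 0" using r' h_first[OF k] h_last[OF k] by auto
  finally show "hpart \<psi> (\<psi> (exch_exp k r')) (mu k) = Xv (exch_exp k r')"
    by (simp add: qt_mult_one_left Xv_def)
qed

lemma supp_mu_pow: assumes k: "k \<in> {1..2}"
  shows "supp (qt_pow m L (mu k) K) \<subseteq> {x. \<exists>n. fst x = (\<lambda>j. int K * exch_base k j + n * bt k j)}"
proof (induction K)
  case 0 show ?case by (auto intro!: exI[of _ 0])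
next
  case (Suc K)
  show ?case
  proof
    fix x assume "x \<in> supp (qt_pow m L (mu k) (Suc K))"
    hence "x \<in> supp (qt_mult m L (qt_pow m L (mu k) K) (mu k))" by simp
    hence "x \<in> (\<lambda>(x,y). qkey_mul m L x y) ` (supp (qt_pow m L (mu k) K) \<times> supp (mu k))"
      using supp_mult[of "qt_pow m L (mu k) K" "mu k" m L]
        carrier_finite[OF qt_pow_carrier[OF mu_carrier[OF k]]] carrier_finite[OF mu_carrier[OF k]]
      by (meson subsetD)
    then obtain p q where pq: "p \<in> supp (qt_pow m L (mu k) K)" "q \<in> supp (mu k)" "x = qkey_mul m L p q" by auto
    obtain n where n: "fst p = (\<lambda>j. int K * exch_base k j + n * bt k j)" using Suc pq(1) by auto
    obtain r where r: "fst q = exch_exp k r" using supp_mu[OF k] pq(2) by auto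
    have "fst x = (\<lambda>j. int (Suc K) * exch_base k j + (n + int r) * bt k j)"
      using pq(3) n r by (auto simp: exch_exp_eq algebra_simps)
    thus "x \<in> {x. \<exists>n. fst x = (\<lambda>j. int (Suc K) * exch_base k j + n * bt k j)}" by blast
  qed
qed

lemma mu_pow_carrier: "k \<in> {1..2} \<Longrightarrow> qt_pow m L (mu k) K \<in> qt_carrier m"
  using mu_carrier by auto

definition r_low :: nat where "r_low = (if bt 2 1 > 0 then 0 else dd 2)"

lemma mu2_lowest_part: assumes nd: "bt 2 1 \<noteq> 0"
  shows "supp (mu 2) \<subseteq> {x. fst x 1 \<ge> 0}" and "hpart (\<lambda>c. c 1) 0 (mu 2) = Xv (exch_exp 2 r_low)"
    and "exch_exp 2 r_low 1 = 0"
proof -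
  have k: "(2::nat) \<in> {1..2}" by simp
  have dpos: "d 2 > 0" using d_pos by simp
  have v1: "exch_exp 2 r (Suc 0) = int r * pos_part (bt 2) (Suc 0) + (d 2 - int r) * pos_part (\<lambda>l. - bt 2 l) (Suc 0)" for r
    by (simp add: exch_exp_def evec_def)
  show z: "exch_exp 2 r_low 1 = 0" using dpos by (auto simp: v1 r_low_def pos_part_def)
  have gt: "exch_exp 2 r 1 > exch_exp 2 r_low 1" if "r \<le> dd 2" "r \<noteq> r_low" for r
  proof (cases "bt 2 1 > 0")
    case True thus ?thesis using that z by (simp add: v1 r_low_def pos_part_def)
  next
    case False
    hence "bt 2 1 < 0" using nd by simp
    moreover have "int r < d 2" using that False dpos by (auto simp: r_low_def)
    ultimately show ?thesis using z by (auto simp: v1 pos_part_def intro!: mult_pos_neg)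
  qed
  have r0': "r_low = 0 \<or> r_low = dd 2" by (simp add: r_low_def)
  show "supp (mu 2) \<subseteq> {x. fst x 1 \<ge> 0}" using mu_lowest_part(1)[OF k r0', of "\<lambda>c. c 1"] gt z by auto
  show "hpart (\<lambda>c. c 1) 0 (mu 2) = Xv (exch_exp 2 r_low)" using mu_lowest_part(2)[OF k r0', of "\<lambda>c. c 1"] gt z by auto
qed

lemma mu2_pow_lowest_part: assumes nd: "bt 2 1 \<noteq> 0"
  shows "supp (qt_pow m L (mu 2) l) \<subseteq> {x. fst x 1 \<ge> 0}"
    and "hpart (\<lambda>c. c 1) 0 (qt_pow m L (mu 2) l) = qmon (\<lambda>i. int l * exch_exp 2 r_low i) 0"
proof -
  have k: "(2::nat) \<in> {1..2}" by simp
  show "supp (qt_pow m L (mu 2) l) \<subseteq> {x. fst x 1 \<ge> 0}"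
    using supp_pow_degree_ge[OF additive_coordinate mu_carrier[OF k] mu2_lowest_part(1)[OF nd], of L l] by simp
  have "hpart (\<lambda>c. c 1) (int l * 0) (qt_pow m L (mu 2) l) = qt_pow m L (hpart (\<lambda>c. c 1) 0 (mu 2)) l"
    by (rule hpart_pow_lowest[OF additive_coordinate mu_carrier[OF k] mu2_lowest_part(1)[OF nd]])
  thus "hpart (\<lambda>c. c 1) 0 (qt_pow m L (mu 2) l) = qmon (\<lambda>i. int l * exch_exp 2 r_low i) 0"
    using mu2_lowest_part(2)[OF nd] by (simp add: Xv_def qt_pow_qmon[OF L_skew])
qed

lemma lin_exch_exp: "lin m u (exch_exp k r) = lin m u (exch_base k) + int r * lin m u (bt k)"
  by (simp add: exch_exp_eq lin_add lin_smul)

text \<open>The columns \<open>\<beta>\<^sup>1, \<beta>\<^sup>2\<close> are linearly independent: otherwise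
  \<open>\<Lambda>(e\<^sub>1,\<beta>\<^sup>1) \<Lambda>(e\<^sub>2,\<beta>\<^sup>2) = \<Lambda>(e\<^sub>1,\<beta>\<^sup>2) \<Lambda>(e\<^sub>2,\<beta>\<^sup>1) = 0\<close>,
  contradicting compatibility.\<close>

lemma beta_minor_nonzero: "\<exists>a\<in>{1..m}. \<exists>b\<in>{1..m}. bt 1 a * bt 2 b \<noteq> bt 1 b * bt 2 a"
proof (rule ccontr)
  assume "\<not> ?thesis"
  hence minors: "\<And>a b. a \<in> {1..m} \<Longrightarrow> b \<in> {1..m} \<Longrightarrow> bt 1 a * bt 2 b = bt 1 b * bt 2 a" by blast
  have k1: "(1::nat) \<in> {1..2}" and k2: "(2::nat) \<in> {1..2}" by auto
  have a1: "(1::nat) \<in> {1..m}" and a2: "(2::nat) \<in> {1..m}" using m2 by auto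
  have "lam_form m L (evec 1) (bt 1) * lam_form m L (evec 2) (bt 2) =
      (\<Sum>a\<in>{1..m}. \<Sum>b\<in>{1..m}. (L 1 a * bt 1 a) * (L 2 b * bt 2 b))"
    unfolding lam_evec_left[OF a1] lam_evec_left[OF a2] by (simp add: sum_product)
  also have "\<dots> = (\<Sum>a\<in>{1..m}. \<Sum>b\<in>{1..m}. (L 1 a * bt 2 a) * (L 2 b * bt 1 b))"
  proof (intro sum.cong refl)
    fix a b assume "a \<in> {1..m}" "b \<in> {1..m}"
    hence "bt 1 a * bt 2 b = bt 1 b * bt 2 a" by (rule minors)
    hence "L 1 a * L 2 b * (bt 1 a * bt 2 b) = L 1 a * L 2 b * (bt 1 b * bt 2 a)" by simp
    thus "(L 1 a * bt 1 a) * (L 2 b * bt 2 b) = (L 1 a * bt 2 a) * (L 2 b * bt 1 b)"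
      by (simp add: algebra_simps)
  qed
  also have "\<dots> = lam_form m L (evec 1) (bt 2) * lam_form m L (evec 2) (bt 1)"
    unfolding lam_evec_left[OF a1] lam_evec_left[OF a2] by (simp add: sum_product)
  also have "\<dots> = 0" using lam_evec_beta[OF k2 a1] by simp
  finally show False using lam_evec_beta_own[OF k1] lam_evec_beta_own[OF k2] by simp
qed

lemma separating_functional: obtains u where "lin m u (bt 2) = 0" "lin m u (bt 1) > 0"
proof -
  obtain a b where ab: "a \<in> {1..m}" "b \<in> {1..m}" "bt 1 a * bt 2 b \<noteq> bt 1 b * bt 2 a"
    using beta_minor_nonzero by blast
  hence anb: "a \<noteq> b" by auto
  define D where "D = bt 1 a * bt 2 b - bt 1 b * bt 2 a"
  define s :: int where "s = (if D > 0 then 1 else -1)"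
  let ?u = "\<lambda>i. (s * bt 2 b) * evec a i + (- s * bt 2 a) * evec b i"
  have lu: "lin m ?u v = s * bt 2 b * v a + - s * bt 2 a * v b" for v
    by (rule lin_two_coordinates[OF ab(1,2) anb])
  show ?thesis
  proof (rule that[of ?u])
    show "lin m ?u (bt 2) = 0" unfolding lu by (simp add: algebra_simps)
    have "lin m ?u (bt 1) = s * D" unfolding lu by (simp add: D_def algebra_simps)
    thus "lin m ?u (bt 1) > 0" using ab(3) by (auto simp: s_def D_def)
  qed
qed

lemma exch_exp_degenerate: assumes dg: "bt 2 1 = 0"
  shows "exch_exp 1 r 2 = 0" "exch_exp 2 r 1 = 0" "exch_base 1 2 = 0" "exch_base 2 1 = 0"
  using dg beta_offdiag_zero_iff by (simp_all add: exch_exp_def exch_base_def pos_part_def evec_def)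

lemma supp_mu_degenerate: assumes dg: "bt 2 1 = 0"
  shows "supp (mu 1) \<subseteq> {x. fst x 2 = 0}" "supp (mu 2) \<subseteq> {x. fst x 1 = 0}"
  using supp_mu[of 1] supp_mu[of 2] exch_exp_degenerate[OF dg] by auto

lemma supp_mu_pow_degenerate: assumes dg: "bt 2 1 = 0"
  shows "supp (qt_pow m L (mu 1) K) \<subseteq> {x. fst x 2 = 0}" "supp (qt_pow m L (mu 2) K) \<subseteq> {x. fst x 1 = 0}"
  using supp_pow_homogeneous[OF additive_coordinate mu_carrier supp_mu_degenerate(1)[OF dg], of L K]
    supp_pow_homogeneous[OF additive_coordinate mu_carrier supp_mu_degenerate(2)[OF dg], of L K] by auto

lemma mult_mu2_pow_eq_twist: assumes dg: "bt 2 1 = 0" and Fc: "F \<in> qt_carrier m" and Fs: "supp F \<subseteq> {x. fst x 2 = 0}"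
  shows "qt_mult m L F (qt_pow m L (mu 2) l) = qt_mult m L (qt_pow m L (mu 2) l) (twist m L (\<lambda>j. int l * exch_base 2 j) F)"
proof (rule mult_eq_mult_twist[OF L_skew carrier_finite[OF Fc] carrier_finite[OF mu_pow_carrier]])
  show "(2::nat) \<in> {1..2}" by simp
  fix x y assume x: "x \<in> supp F" and y: "y \<in> supp (qt_pow m L (mu 2) l)"
  have x2: "fst x 2 = 0" using Fs x by auto
  obtain n where n: "fst y = (\<lambda>j. int l * exch_base 2 j + n * bt 2 j)" using supp_mu_pow[of 2 l] y by auto
  show "lam_form m L (fst x) (fst y) = lam_form m L (fst x) (\<lambda>j. int l * exch_base 2 j)"
    using lam_beta[of 2 "fst x"] x2 n by (simp add: lam_add_right lam_smul_right)
qed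

lemma mu2_pow_divides_degenerate: assumes dg: "bt 2 1 = 0"
    and Gc: "G \<in> qt_carrier m" and Hc: "H \<in> qt_carrier m"
    and eq: "qt_mult m L (qt_pow m L (mu 1) K) G = qt_mult m L (qt_pow m L (mu 2) l) H"
  shows "\<exists>\<kappa>\<in>qt_carrier m. G = qt_mult m L (qt_pow m L (mu 2) l) \<kappa>"
proof -
  have k1: "(1::nat) \<in> {1..2}" and k2: "(2::nat) \<in> {1..2}" by auto
  \<comment> \<open>With respect to \<open>lin m u\<close>, \<open>mu 2\<close> is homogeneous and \<open>mu 1\<close> has a monomial lowest term.\<close>
  obtain u where u: "lin m u (bt 2) = 0" "lin m u (bt 1) > 0" using separating_functional by blast
  let ?\<psi> = "lin m u"
  have ad: "additive ?\<psi>" by (rule additive_lin)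
  have gt: "?\<psi> (exch_exp 1 r) > ?\<psi> (exch_exp 1 0)" if "r \<le> dd 1" "r \<noteq> 0" for r
    using u that by (simp add: lin_exch_exp)
  have r00: "(0::nat) = 0 \<or> (0::nat) = dd 1" by simp
  note low1 = mu_lowest_part[OF k1 r00, of ?\<psi>, OF gt]
  let ?P = "qt_pow m L (mu 1) K" and ?Q = "qt_pow m L (mu 2) l"
  let ?u = "\<lambda>i. int K * exch_exp 1 0 i"
  have Ps: "supp ?P \<subseteq> {x. ?\<psi> (fst x) \<ge> int K * ?\<psi> (exch_exp 1 0)}"
    by (rule supp_pow_degree_ge[OF ad mu_carrier[OF k1] low1(1)])
  have Pl: "hpart ?\<psi> (int K * ?\<psi> (exch_exp 1 0)) ?P = qmon ?u 0"
    using hpart_pow_lowest[OF ad mu_carrier[OF k1] low1(1), of K L] low1(2) by (simp add: Xv_def qt_pow_qmon[OF L_skew])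
  have Q1: "supp (mu 2) \<subseteq> {x. ?\<psi> (fst x) = ?\<psi> (exch_exp 2 0)}"
    using supp_mu[OF k2] u by (auto simp: lin_exch_exp)
  have Qs: "supp ?Q \<subseteq> {x. ?\<psi> (fst x) = int l * ?\<psi> (exch_exp 2 0)}"
    by (rule supp_pow_homogeneous[OF ad mu_carrier[OF k2] Q1])
  have uc: "qmon (\<lambda>i. - ?u i) (- 0) \<in> qt_carrier m"
    using exch_exp_valid[OF k1, of 0] by (auto simp: valid_vec_def intro!: qmon_carrier)
  have T1: "\<exists>F\<in>qt_carrier m. qt_mult m L (qmon (\<lambda>i. - ?u i) (- 0)) ?Q = qt_mult m L ?Q F"
  proof
    show "qt_mult m L (qmon (\<lambda>i. - ?u i) (- 0)) ?Q =
      qt_mult m L ?Q (twist m L (\<lambda>j. int l * exch_base 2 j) (qmon (\<lambda>i. - ?u i) (- 0)))"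
      by (rule mult_mu2_pow_eq_twist[OF dg uc]) (use exch_exp_degenerate(1)[OF dg, of 0] in simp)
  qed (rule twist_carrier[OF uc])
  have T2: "\<exists>P'\<in>qt_carrier m. qt_mult m L ?P ?Q = qt_mult m L ?Q P'"
  proof
    show "qt_mult m L ?P ?Q = qt_mult m L ?Q (twist m L (\<lambda>j. int l * exch_base 2 j) ?P)"
      by (rule mult_mu2_pow_eq_twist[OF dg mu_pow_carrier[OF k1] supp_mu_pow_degenerate(1)[OF dg]])
  qed (rule twist_carrier[OF mu_pow_carrier[OF k1]])
  show ?thesis
    by (rule left_divides_if_mult_eq[OF L_skew ad mu_pow_carrier[OF k1] Ps Pl mu_pow_carrier[OF k2] Qs T1 T2 Gc Hc eq])
qed

section \<open>The lower and the upper bounds\<close>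

lemma qmon_in_generate_ring:
  fixes H
  defines "G \<equiv> generate_ring (qt_ring m L) H"
  assumes ZPH: "ZP m 2 \<subseteq> H" and X1: "Xv (evec 1) \<in> G" and X2: "Xv (evec 2) \<in> G"
    and Y1: "c 1 < 0 \<Longrightarrow> Xv (\<lambda>i. - evec 1 i) \<in> G" and Y2: "c 2 < 0 \<Longrightarrow> Xv (\<lambda>i. - evec 2 i) \<in> G"
    and v: "valid_vec m c"
  shows "qmon c k \<in> G"
proof -
  have pw: "Xv (\<lambda>i. c j * evec j i) \<in> G"
    if "Xv (evec j) \<in> G" "c j < 0 \<Longrightarrow> Xv (\<lambda>i. - evec j i) \<in> G" for j
    using Xv_int_power_in_generate_ring[OF L_skew] that unfolding G_def by blast
  define a1 where "a1 = (\<lambda>i. c 1 * evec 1 i)"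
  define a2 where "a2 = (\<lambda>i. c 2 * evec 2 i)"
  define cf where "cf = (\<lambda>i. if i = 1 \<or> i = 2 then 0 else c i)"
  define k' where "k' = k - (lam_form m L a2 cf + lam_form m L a1 (\<lambda>i. a2 i + cf i))"
  have t1: "Xv a1 \<in> G" unfolding a1_def using pw X1 Y1 by blast
  have t2: "Xv a2 \<in> G" unfolding a2_def using pw X2 Y2 by blast
  have cfv: "valid_vec m cf" using v by (auto simp: valid_vec_def cf_def)
  have t3: "Xv cf \<in> G" unfolding G_def Xv_def
    by (rule gen_incl) (use ZPH qmon_ZP[OF cfv] in \<open>auto simp: cf_def\<close>)
  have t0: "qmon (\<lambda>i. 0) k' \<in> G" unfolding G_def
    by (rule gen_incl) (use ZPH qmon_ZP[where c="\<lambda>i. 0"] in auto)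
  have prod: "qt_mult m L (qmon (\<lambda>i. 0) k') (qt_mult m L (Xv a1) (qt_mult m L (Xv a2) (Xv cf))) \<in> G"
    unfolding G_def by (intro gen_mult) (use t0 t1 t2 t3 G_def in auto)
  have vec: "(\<lambda>i. a1 i + (a2 i + cf i)) = c"
    by (rule ext) (auto simp: a1_def a2_def cf_def evec_def)
  have "qt_mult m L (qmon (\<lambda>i. 0) k') (qt_mult m L (Xv a1) (qt_mult m L (Xv a2) (Xv cf))) = qmon c k"
    by (simp add: Xv_def qmon_mult k'_def vec)
  thus ?thesis using prod by simp
qed

abbreviation "X1 \<equiv> Xv (evec 1)"

abbreviation "X2 \<equiv> Xv (evec 2)"

abbreviation "Y1 \<equiv> Xv (\<lambda>i. - evec 1 i)"

abbreviation "Y2 \<equiv> Xv (\<lambda>i. - evec 2 i)"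

abbreviation "Alow \<equiv> ZP_adj m 2 L {X1, mu 1, X2, mu 2}"

abbreviation "U1 \<equiv> ZP_adj m 2 L {X1, mu 1, X2, Y2}"

abbreviation "U2 \<equiv> ZP_adj m 2 L {X1, Y1, X2, mu 2}"

lemma evec_valid: "k \<in> {1..2} \<Longrightarrow> valid_vec m (evec k)" using m2 by (auto simp: valid_vec_def evec_def)

lemma nevec_valid: "k \<in> {1..2} \<Longrightarrow> valid_vec m (\<lambda>i. - evec k i)" using m2 by (auto simp: valid_vec_def evec_def)

lemma mu_in_generate_ring:
  fixes H
  defines "G \<equiv> generate_ring (qt_ring m L) H"
  assumes k: "k \<in> {1..2}" and ZPH: "ZP m 2 \<subseteq> H" and X1: "X1 \<in> G" and X2: "X2 \<in> G"
    and Y: "Xv (\<lambda>i. - evec k i) \<in> G"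
  shows "mu k \<in> G"
proof -
  have "(\<lambda>x. \<Sum>r\<in>{0..dd k}. qt_mult m L (h k r) (Xv (exch_exp k r)) x) \<in> G"
    unfolding G_def
  proof (rule gen_sum)
    fix r assume r: "r \<in> {0..dd k}"
    have hr: "h k r \<in> G" unfolding G_def by (rule gen_incl) (use h_base[OF k] r base_ring_subset_ZP ZPH in auto)
    have "qmon (exch_exp k r) 0 \<in> G" unfolding G_def
    proof (rule qmon_in_generate_ring[OF ZPH])
      show "X1 \<in> generate_ring (qt_ring m L) H" "X2 \<in> generate_ring (qt_ring m L) H" using X1 X2 G_def by auto
      show "valid_vec m (exch_exp k r)" by (rule exch_exp_valid[OF k])
      show "exch_exp k r 1 < 0 \<Longrightarrow> Y1 \<in> generate_ring (qt_ring m L) H"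
        using exch_exp_other_nonneg[OF k, of 1 r] r Y G_def exch_exp_own[OF k] k by (cases "k = 1") auto
      show "exch_exp k r 2 < 0 \<Longrightarrow> Y2 \<in> generate_ring (qt_ring m L) H"
        using exch_exp_other_nonneg[OF k, of 2 r] r Y G_def exch_exp_own[OF k] k by (cases "k = 2") auto
    qed
    thus "qt_mult m L (h k r) (Xv (exch_exp k r)) \<in> generate_ring (qt_ring m L) H"
      using hr G_def by (simp add: Xv_def gen_mult)
  qed simp
  thus ?thesis by (simp add: mu_eq_sum)
qed

lemma Alow_subset_U1: "Alow \<subseteq> U1"
  unfolding ZP_adj_def
proof (rule generate_ring_mono)
  let ?G = "generate_ring (qt_ring m L) (ZP m 2 \<union> {X1, mu 1, X2, Y2})"
  have "mu 2 \<in> ?G" by (rule mu_in_generate_ring) (auto intro: gen_incl)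
  thus "ZP m 2 \<union> {X1, mu 1, X2, mu 2} \<subseteq> ?G" by (auto intro: gen_incl)
qed

lemma Alow_subset_U2: "Alow \<subseteq> U2"
  unfolding ZP_adj_def
proof (rule generate_ring_mono)
  let ?G = "generate_ring (qt_ring m L) (ZP m 2 \<union> {X1, Y1, X2, mu 2})"
  have "mu 1 \<in> ?G" by (rule mu_in_generate_ring) (auto intro: gen_incl)
  thus "ZP m 2 \<union> {X1, mu 1, X2, mu 2} \<subseteq> ?G" by (auto intro: gen_incl)
qed

abbreviation "C1 \<equiv> lower_divisible m L 1 (mu 1)"

abbreviation "C2 \<equiv> lower_divisible m L 2 (mu 2)"

lemma generate_ring_lower_divisible_mu:
  assumes k: "k \<in> {1..2}" and Hc: "H \<subseteq> qt_carrier m"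
    and Hs: "\<And>f. f \<in> H \<Longrightarrow> f \<noteq> mu k \<Longrightarrow> supp f \<subseteq> {x. fst x k \<ge> 0}"
  shows "generate_ring (qt_ring m L) H \<subseteq> lower_divisible m L k (mu k)"
proof (rule normalizing_element.generate_ring_lower_divisible[OF mu_normalizing[OF k] _ Hc])
  show "H \<subseteq> lower_divisible m L k (mu k)"
  proof
    fix f assume f: "f \<in> H"
    show "f \<in> lower_divisible m L k (mu k)"
    proof (cases "f = mu k")
      case True
      thus ?thesis using normalizing_element.generator_lower_divisible[OF mu_normalizing[OF k]] by simp
    next
      case False
      thus ?thesis using normalizing_element.lower_divisible_nonneg[OF mu_normalizing[OF k]] f Hc Hs by blast
    qed
  qed
qed

lemma generators_carrier: "ZP m 2 \<union> {X1, Y1, X2, Y2, mu 1, mu 2} \<subseteq> qt_carrier m"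
  using ZP_carrier mu_carrier[of 1] mu_carrier[of 2] evec_valid nevec_valid by (auto simp: Xv_def intro!: qmon_carrier)

lemma U1_subset_C1: "U1 \<subseteq> C1"
  unfolding ZP_adj_def
proof (rule generate_ring_lower_divisible_mu)
  show "ZP m 2 \<union> {X1, mu 1, X2, Y2} \<subseteq> qt_carrier m" using generators_carrier by blast
qed (auto simp: Xv_def evec_def dest!: ZP_supp)

lemma U2_subset_C2: "U2 \<subseteq> C2"
  unfolding ZP_adj_def
proof (rule generate_ring_lower_divisible_mu)
  show "ZP m 2 \<union> {X1, Y1, X2, mu 2} \<subseteq> qt_carrier m" using generators_carrier by blast
qed (auto simp: Xv_def evec_def dest!: ZP_supp)

abbreviation "Alow_gens \<equiv> ZP m 2 \<union> {X1, mu 1, X2, mu 2}"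

lemma Alow_gens_carrier: "Alow_gens \<subseteq> qt_carrier m"
  using generators_carrier by blast

lemma Alow_def: "Alow = generate_ring (qt_ring m L) Alow_gens" by (simp add: ZP_adj_def)

lemma Alow_add: "f \<in> Alow \<Longrightarrow> g \<in> Alow \<Longrightarrow> (\<lambda>x. f x + g x) \<in> Alow"
  unfolding Alow_def by (rule gen_add)

lemma Alow_mult: "f \<in> Alow \<Longrightarrow> g \<in> Alow \<Longrightarrow> qt_mult m L f g \<in> Alow"
  unfolding Alow_def by (rule gen_mult)

lemma Alow_sum: "finite S \<Longrightarrow> (\<And>s. s \<in> S \<Longrightarrow> F s \<in> Alow) \<Longrightarrow> (\<lambda>x. \<Sum>s\<in>S. F s x) \<in> Alow"
  unfolding Alow_def by (rule gen_sum)

lemma Alow_mu: assumes "k \<in> {1..2}" shows "mu k \<in> Alow"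
proof -
  have "k = 1 \<or> k = 2" using assms by auto
  thus ?thesis unfolding Alow_def by (auto intro: gen_incl)
qed

lemma Alow_mu_pow: "k \<in> {1..2} \<Longrightarrow> qt_pow m L (mu k) K \<in> Alow"
  using Alow_mu unfolding Alow_def by (blast intro: gen_pow)

lemma Alow_ZP: "f \<in> ZP m 2 \<Longrightarrow> f \<in> Alow"
  unfolding Alow_def by (rule gen_incl) auto

lemma nonneg_degrees_in_Alow: assumes fc: "f \<in> qt_carrier m" and fs: "supp f \<subseteq> {x. fst x 1 \<ge> 0 \<and> fst x 2 \<ge> 0}"
  shows "f \<in> Alow"
  unfolding Alow_def
proof (rule generate_ring_if_monomials[OF Alow_gens_carrier fc])
  fix x assume x: "x \<in> supp f"
  show "qmon (fst x) (snd x) \<in> generate_ring (qt_ring m L) Alow_gens"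
  proof (rule qmon_in_generate_ring)
    show "ZP m 2 \<subseteq> Alow_gens" by auto
    show "X1 \<in> generate_ring (qt_ring m L) Alow_gens" "X2 \<in> generate_ring (qt_ring m L) Alow_gens"
      by (auto intro: gen_incl)
    show "fst x 1 < 0 \<Longrightarrow> Y1 \<in> generate_ring (qt_ring m L) Alow_gens" using fs x by auto
    show "fst x 2 < 0 \<Longrightarrow> Y2 \<in> generate_ring (qt_ring m L) Alow_gens" using fs x by auto
    show "valid_vec m (fst x)" using x fc carrier_valid by (auto simp: supp_def)
  qed
qed

lemma Alow_subset_C: "Alow \<subseteq> C1 \<inter> C2" using Alow_subset_U1 Alow_subset_U2 U1_subset_C1 U2_subset_C2 by blast

lemma lower_divisible_diff: assumes "f \<in> lower_divisible m L k (mu k)" "g \<in> lower_divisible m L k (mu k)" "k \<in> {1..2}"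
  shows "(\<lambda>x. f x - g x) \<in> lower_divisible m L k (mu k)"
  using normalizing_element.lower_divisible_add[OF mu_normalizing[OF assms(3)] assms(1) normalizing_element.lower_divisible_neg[OF mu_normalizing[OF assms(3)] assms(2)]]
  by simp

lemma supp_mu2_pow_degree1: "supp (qt_pow m L (mu 2) l) \<subseteq> {x. fst x 1 \<ge> 0}"
  using supp_pow_degree_ge[OF additive_coordinate mu_carrier supp_mu_other_degree[of 2 1], of L l] by simp

lemma supp_mu1_pow: "supp (qt_pow m L (mu 1) K) \<subseteq> {x. fst x 1 = - int K}"
  using normalizing_element.supp_Mp[OF mu_normalizing] by simp

lemma supp_mu2_pow: "supp (qt_pow m L (mu 2) K) \<subseteq> {x. fst x 2 = - int K}"
  using normalizing_element.supp_Mp[OF mu_normalizing] by simp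

section \<open>The intersection of the upper bounds\<close>

lemma mu2_pow_mult_negative_zero:
  assumes gmc: "gm \<in> qt_carrier m" and gms: "supp gm \<subseteq> {x. fst x 1 < 0}"
    and Zs: "supp (qt_mult m L (qt_pow m L (mu 2) l) gm) \<subseteq> {x. fst x 1 \<ge> 0}"
  shows "qt_mult m L (qt_pow m L (mu 2) l) gm = (\<lambda>x. 0)"
proof -
  let ?Q = "qt_pow m L (mu 2) l"
  have Qc: "?Q \<in> qt_carrier m" by (rule mu_pow_carrier) simp
  show ?thesis
  proof (cases "bt 2 1 = 0")
    case True
    have "supp (qt_mult m L ?Q gm) \<subseteq> {z. \<exists>a b. a = 0 \<and> b < 0 \<and> fst z 1 = a + b}"
      by (rule supp_mult_degrees[OF carrier_finite[OF Qc] carrier_finite[OF gmc] additive_coordinate])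
        (use supp_mu_pow_degenerate(2)[OF True, of l] gms in auto)
    hence "supp (qt_mult m L ?Q gm) = {}" using Zs by force
    thus ?thesis by (rule supp_empty_zero)
  next
    case nd: False
    have "supp gm = {}"
    proof (rule ccontr)
      assume "supp gm \<noteq> {}"
      then obtain z x where "z \<in> supp (qt_mult m L ?Q gm)" "x \<in> supp gm" "fst z 1 = 0 + fst x 1"
        using lowest_degree_survives_mult[OF additive_coordinate Qc mu2_pow_lowest_part[OF nd] gmc] by blast
      thus False using Zs gms by force
    qed
    hence "gm = (\<lambda>x. 0)" by (rule supp_empty_zero)
    thus ?thesis by simp
  qed
qed

lemma mu2_pow_mult_deg0_in_Alow:
  assumes g: "g \<in> deg0 m 2" and ys: "supp (qt_mult m L (qt_pow m L (mu 2) l) g) \<subseteq> {x. fst x 1 \<ge> 0}"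
  shows "qt_mult m L (qt_pow m L (mu 2) l) g \<in> Alow"
proof -
  let ?Q = "qt_pow m L (mu 2) l"
  have Qc: "?Q \<in> qt_carrier m" by (rule mu_pow_carrier) simp
  have gc: "g \<in> qt_carrier m" and gs: "supp g \<subseteq> {x. fst x 2 = 0}" using g by (auto simp: deg0_def)
  define gp where "gp = (\<lambda>x. if fst x 1 \<ge> 0 then g x else 0)"
  define gm where "gm = (\<lambda>x. g x - gp x)"
  have gpc: "gp \<in> qt_carrier m"
    by (rule carrier_intro) (use gc carrier_valid in \<open>auto simp: gp_def split: if_splits
        intro: finite_subset[OF _ carrier_finite[OF gc]] simp: supp_def\<close>)
  have gmc: "gm \<in> qt_carrier m" unfolding gm_def using add_carrier[OF gc neg_carrier[OF gpc]] by simp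
  have gps: "supp gp \<subseteq> {x. fst x 1 \<ge> 0 \<and> fst x 2 \<ge> 0}" using gs by (auto simp: gp_def supp_def)
  have gms: "supp gm \<subseteq> {x. fst x 1 < 0}" by (auto simp: gm_def gp_def supp_def)
  have Qgp: "supp (qt_mult m L ?Q gp) \<subseteq> {x. fst x 1 \<ge> 0 + 0}"
    by (rule supp_mult_degree_ge[OF carrier_finite[OF Qc] carrier_finite[OF gpc] additive_coordinate supp_mu2_pow_degree1])
      (use gps in auto)
  have Qg: "qt_mult m L ?Q g = (\<lambda>x. qt_mult m L ?Q gp x + qt_mult m L ?Q gm x)"
    using qt_mult_add_right[OF carrier_finite[OF gpc] carrier_finite[OF gmc] carrier_finite[OF Qc]]
    by (simp add: gm_def)
  hence "qt_mult m L ?Q gm = (\<lambda>x. qt_mult m L ?Q g x - qt_mult m L ?Q gp x)" by auto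
  hence "supp (qt_mult m L ?Q gm) \<subseteq> {x. fst x 1 \<ge> 0}"
    using supp_diff_subset[OF ys, of "qt_mult m L ?Q gp"] Qgp by simp
  hence "qt_mult m L ?Q gm = (\<lambda>x. 0)" by (rule mu2_pow_mult_negative_zero[OF gmc gms])
  hence "qt_mult m L ?Q g = qt_mult m L ?Q gp" using Qg by simp
  thus ?thesis using Alow_mult[OF Alow_mu_pow nonneg_degrees_in_Alow[OF gpc gps]] by simp
qed

lemma nonneg_degree1_in_Alow:
  assumes yC: "y \<in> C2" and ys: "supp y \<subseteq> {x. fst x 1 \<ge> 0}"
  shows "y \<in> Alow"
proof -
  have yc: "y \<in> qt_carrier m" using yC by (simp add: lower_divisible_def)
  have "hpart (\<lambda>c. c 2) b y \<in> Alow" for b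
  proof -
    let ?yb = "hpart (\<lambda>c. c 2) b y"
    have ybs1: "supp ?yb \<subseteq> {x. fst x 1 \<ge> 0}" using supp_hpart_subset[of "\<lambda>c. c 2" b y] ys by blast
    show ?thesis
    proof (cases "b \<ge> 0")
      case True
      have "supp ?yb \<subseteq> {x. fst x 1 \<ge> 0 \<and> fst x 2 \<ge> 0}" using ybs1 supp_hpart[of "\<lambda>c. c 2" b y] True by auto
      thus ?thesis by (rule nonneg_degrees_in_Alow[OF hpart_carrier[OF yc]])
    next
      case False
      hence "b < 0" by simp
      then obtain g where g: "g \<in> deg0 m 2" "?yb = qt_mult m L (qt_pow m L (mu 2) (nat (-b))) g"
        using yC unfolding lower_divisible_def by blast
      thus ?thesis using mu2_pow_mult_deg0_in_Alow ybs1 by simp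
    qed
  qed
  hence "(\<lambda>x. \<Sum>b\<in>(\<lambda>x. fst x 2) ` supp y. hpart (\<lambda>c. c 2) b y x) \<in> Alow"
    using carrier_finite[OF yc] by (intro Alow_sum) simp_all
  thus ?thesis using sum_hparts[OF carrier_finite[OF yc], of "\<lambda>c. c 2"] by simp
qed

lemma mu2_pow_lowest_divides_nondegenerate:
  assumes nd: "bt 2 1 \<noteq> 0" and Gc: "G \<in> qt_carrier m"
    and Gs: "supp G \<subseteq> {x. fst x 1 = 0 \<and> fst x 2 = - int l}"
  shows "\<exists>\<kappa>\<in>ZP m 2. qt_mult m L (hpart (\<lambda>c. c 1) 0 (qt_pow m L (mu 2) l)) \<kappa> = G"
proof -
  define v where "v = (\<lambda>i. int l * exch_exp 2 r_low i)"
  define \<kappa> where "\<kappa> = qt_mult m L (qmon (\<lambda>i. - v i) (- 0)) G"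
  have vc: "qmon (\<lambda>i. - v i) (- 0) \<in> qt_carrier m"
    using exch_exp_valid[of 2 r_low] by (auto simp: v_def valid_vec_def intro!: qmon_carrier)
  have v: "v 1 = 0" "v 2 = - int l" using mu2_lowest_part(3)[OF nd] exch_exp_own[of 2 r_low] by (simp_all add: v_def)
  have Gs1: "supp G \<subseteq> {x. fst x 1 = 0}" and Gs2: "supp G \<subseteq> {x. fst x 2 = - int l}" using Gs by auto
  have "supp \<kappa> \<subseteq> {x. fst x 1 = - v 1 + 0}" unfolding \<kappa>_def
    by (rule supp_mult_homogeneous[OF _ carrier_finite[OF Gc] additive_coordinate _ Gs1]) simp_all
  moreover have "supp \<kappa> \<subseteq> {x. fst x 2 = - v 2 + - int l}" unfolding \<kappa>_def
    by (rule supp_mult_homogeneous[OF _ carrier_finite[OF Gc] additive_coordinate _ Gs2]) simp_all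
  ultimately have "\<kappa> \<in> ZP m 2" unfolding \<kappa>_def using v by (intro ZP_I[OF mult_carrier[OF vc Gc]]) auto
  moreover have "qt_mult m L (hpart (\<lambda>c. c 1) 0 (qt_pow m L (mu 2) l)) \<kappa> = G"
    unfolding mu2_pow_lowest_part(2)[OF nd] \<kappa>_def v_def
    by (rule qmon_mult_inv_cancel[OF L_skew carrier_finite[OF Gc]])
  ultimately show ?thesis by blast
qed

lemma mu2_pow_divides_in_ZP_degenerate:
  assumes dg: "bt 2 1 = 0" and Gs: "supp G \<subseteq> {x. fst x 1 = 0 \<and> fst x 2 = - int l}"
    and \<kappa>'c: "\<kappa>' \<in> qt_carrier m" and eq: "G = qt_mult m L (qt_pow m L (mu 2) l) \<kappa>'"
  shows "\<exists>\<kappa>\<in>ZP m 2. qt_mult m L (qt_pow m L (mu 2) l) \<kappa> = G"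
proof -
  let ?Q = "qt_pow m L (mu 2) l"
  have Qc: "?Q \<in> qt_carrier m" by (rule mu_pow_carrier) simp
  have Qs1: "supp ?Q \<subseteq> {x. fst x 1 = 0}" by (rule supp_mu_pow_degenerate(2)[OF dg])
  have Gs1: "supp G \<subseteq> {x. fst x 1 = 0}" and Gs2: "supp G \<subseteq> {x. fst x 2 = - int l}" using Gs by auto
  define \<kappa> where "\<kappa> = hpart (\<lambda>c. c 1) 0 (hpart (\<lambda>c. c 2) 0 \<kappa>')"
  have "supp \<kappa> \<subseteq> {x. fst x 1 = 0 \<and> fst x 2 = 0}"
    unfolding \<kappa>_def using supp_hpart[of "\<lambda>c. c 1" 0] supp_hpart_subset[of "\<lambda>c. c 1" 0] supp_hpart[of "\<lambda>c. c 2" 0 \<kappa>']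
    by blast
  hence "\<kappa> \<in> ZP m 2" unfolding \<kappa>_def using \<kappa>'c by (intro ZP_I hpart_carrier) (simp_all add: \<kappa>_def)
  moreover have "qt_mult m L ?Q \<kappa> = G"
  proof -
    have "qt_mult m L ?Q \<kappa> = hpart (\<lambda>c. c 1) 0 (qt_mult m L ?Q (hpart (\<lambda>c. c 2) 0 \<kappa>'))"
      unfolding \<kappa>_def using hpart_mult_homogeneous_left[OF carrier_finite[OF Qc]
        carrier_finite[OF hpart_carrier[OF \<kappa>'c]] additive_coordinate Qs1, of 0] by simp
    also have "qt_mult m L ?Q (hpart (\<lambda>c. c 2) 0 \<kappa>') = hpart (\<lambda>c. c 2) (- int l) (qt_mult m L ?Q \<kappa>')"
      using hpart_mult_homogeneous_left[OF carrier_finite[OF Qc] carrier_finite[OF \<kappa>'c] additive_coordinate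
          supp_mu2_pow, of "- int l"] by simp
    also have "hpart (\<lambda>c. c 1) 0 (hpart (\<lambda>c. c 2) (- int l) (qt_mult m L ?Q \<kappa>')) = G"
      using eq hpart_homogeneous[OF Gs2] hpart_homogeneous[OF Gs1] by simp
    finally show ?thesis .
  qed
  ultimately show ?thesis by blast
qed

lemma degree0_mu2_pow_divides:
  assumes yC2: "y \<in> C2" and g: "g \<in> deg0 m 1"
    and eqy: "hpart (\<lambda>c. c 1) (- int K1) y = qt_mult m L (qt_pow m L (mu 1) K1) g"
    and b: "b < 0"
  shows "\<exists>\<kappa>\<in>ZP m 2. qt_mult m L (hpart (\<lambda>c. c 1) 0 (qt_pow m L (mu 2) (nat (- b)))) \<kappa> = hpart (\<lambda>c. c 2) b g"
proof -
  define l where "l = nat (- b)"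
  let ?P = "qt_pow m L (mu 1) K1" and ?Q = "qt_pow m L (mu 2) l" and ?G = "hpart (\<lambda>c. c 2) b g"
  have Pc: "?P \<in> qt_carrier m" and Qc: "?Q \<in> qt_carrier m" by (auto intro: mu_pow_carrier)
  have gc: "g \<in> qt_carrier m" and gs1: "supp g \<subseteq> {x. fst x 1 = 0}" using g by (auto simp: deg0_def)
  have Gc: "?G \<in> qt_carrier m" using gc by (rule hpart_carrier)
  have lb: "- int l = b" using b by (simp add: l_def)
  have Gs: "supp ?G \<subseteq> {x. fst x 1 = 0 \<and> fst x 2 = - int l}"
    using supp_hpart_subset[of "\<lambda>c. c 2" b g] supp_hpart[of "\<lambda>c. c 2" b g] gs1 lb by blast
  show ?thesis unfolding l_def[symmetric]
  proof (cases "bt 2 1 = 0")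
    case nd: False
    show "\<exists>\<kappa>\<in>ZP m 2. qt_mult m L (hpart (\<lambda>c. c 1) 0 ?Q) \<kappa> = ?G"
      by (rule mu2_pow_lowest_divides_nondegenerate[OF nd Gc Gs])
  next
    case dg: True
    \<comment> \<open>The \<open>X\<^sub>1\<close>-degree \<open>-K1\<close> part of the \<open>X\<^sub>2\<close>-degree \<open>b\<close> part of \<open>y\<close> is divisible both by \<open>?P\<close> and by \<open>?Q\<close>.\<close>
    obtain hh where hh: "hh \<in> deg0 m 2" "hpart (\<lambda>c. c 2) b y = qt_mult m L ?Q hh"
      using yC2 b unfolding lower_divisible_def l_def by blast
    have hc: "hh \<in> qt_carrier m" using hh(1) by (simp add: deg0_def)
    have "hpart (\<lambda>c. c 1) (- int K1) (hpart (\<lambda>c. c 2) b y) = hpart (\<lambda>c. c 2) b (qt_mult m L ?P g)"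
      by (subst hpart_commute) (simp only: eqy)
    also have "\<dots> = qt_mult m L ?P (hpart (\<lambda>c. c 2) (b - 0) g)"
      by (rule hpart_mult_homogeneous_left[OF carrier_finite[OF Pc] carrier_finite[OF gc] additive_coordinate
            supp_mu_pow_degenerate(1)[OF dg]])
    finally have "qt_mult m L ?P ?G = qt_mult m L ?Q (hpart (\<lambda>c. c 1) (- int K1) hh)"
      using hh(2) hpart_mult_homogeneous_left[OF carrier_finite[OF Qc] carrier_finite[OF hc] additive_coordinate
          supp_mu_pow_degenerate(2)[OF dg]] by simp
    then obtain \<kappa>' where "\<kappa>' \<in> qt_carrier m" "?G = qt_mult m L ?Q \<kappa>'"
      using mu2_pow_divides_degenerate[OF dg Gc hpart_carrier[OF hc]] by blast
    moreover have "hpart (\<lambda>c. c 1) 0 ?Q = ?Q" using hpart_homogeneous[OF supp_mu_pow_degenerate(2)[OF dg]] by simp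
    ultimately show "\<exists>\<kappa>\<in>ZP m 2. qt_mult m L (hpart (\<lambda>c. c 1) 0 ?Q) \<kappa> = ?G"
      using mu2_pow_divides_in_ZP_degenerate[OF dg Gs] by simp
  qed
qed

lemma mu_pows_mult_ZP_in_Alow:
  fixes K1 l :: nat
  assumes k: "\<kappa> \<in> ZP m 2"
  defines "z \<equiv> qt_mult m L (qt_pow m L (mu 1) K1) (qt_mult m L (qt_pow m L (mu 2) l) \<kappa>)"
  shows "z \<in> Alow" and "supp z \<subseteq> {x. fst x 1 \<ge> - int K1}"
    and "hpart (\<lambda>c. c 1) (- int K1) z =
      qt_mult m L (qt_pow m L (mu 1) K1) (qt_mult m L (hpart (\<lambda>c. c 1) 0 (qt_pow m L (mu 2) l)) \<kappa>)"
proof -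
  let ?P = "qt_pow m L (mu 1) K1" and ?Q = "qt_pow m L (mu 2) l"
  have Pc: "?P \<in> qt_carrier m" and Qc: "?Q \<in> qt_carrier m" by (auto intro: mu_pow_carrier)
  have kc: "\<kappa> \<in> qt_carrier m" using k ZP_carrier by blast
  have ks: "supp \<kappa> \<subseteq> {x. fst x 1 = 0}" using ZP_supp[OF k] by auto
  have Qkc: "qt_mult m L ?Q \<kappa> \<in> qt_carrier m" by (rule mult_carrier[OF Qc kc])
  show "z \<in> Alow" unfolding z_def by (intro Alow_mult Alow_mu_pow Alow_ZP[OF k]) simp_all
  have Qks: "supp (qt_mult m L ?Q \<kappa>) \<subseteq> {x. fst x 1 \<ge> 0 + 0}"
    by (rule supp_mult_degree_ge[OF carrier_finite[OF Qc] carrier_finite[OF kc] additive_coordinate supp_mu2_pow_degree1])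
      (use ks in auto)
  have Ps: "supp ?P \<subseteq> {x. fst x 1 \<ge> - int K1}" using supp_mu1_pow[of K1] by auto
  have "supp z \<subseteq> {x. fst x 1 \<ge> - int K1 + 0}" unfolding z_def
    by (rule supp_mult_degree_ge[OF carrier_finite[OF Pc] carrier_finite[OF Qkc] additive_coordinate Ps])
      (use Qks in simp)
  thus "supp z \<subseteq> {x. fst x 1 \<ge> - int K1}" by simp
  have "hpart (\<lambda>c. c 1) (- int K1) z = qt_mult m L ?P (hpart (\<lambda>c. c 1) (- int K1 - - int K1) (qt_mult m L ?Q \<kappa>))"
    unfolding z_def
    by (rule hpart_mult_homogeneous_left[OF carrier_finite[OF Pc] carrier_finite[OF Qkc] additive_coordinate supp_mu1_pow])
  also have "hpart (\<lambda>c. c 1) (- int K1 - - int K1) (qt_mult m L ?Q \<kappa>) = qt_mult m L (hpart (\<lambda>c. c 1) (0 - 0) ?Q) \<kappa>"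
    using hpart_mult_homogeneous_right[OF carrier_finite[OF Qc] carrier_finite[OF kc] additive_coordinate ks, of 0] by simp
  finally show "hpart (\<lambda>c. c 1) (- int K1) z = qt_mult m L ?P (qt_mult m L (hpart (\<lambda>c. c 1) 0 ?Q) \<kappa>)" by simp
qed

lemma lift_lowest_component:
  assumes yC2: "y \<in> C2" and g: "g \<in> deg0 m 1"
    and eqy: "hpart (\<lambda>c. c 1) (- int K1) y = qt_mult m L (qt_pow m L (mu 1) K1) g"
  shows "\<exists>z\<in>Alow. supp z \<subseteq> {x. fst x 1 \<ge> - int K1} \<and>
     hpart (\<lambda>c. c 1) (- int K1) z = qt_mult m L (qt_pow m L (mu 1) K1) (hpart (\<lambda>c. c 2) b g)"
proof (cases "b \<ge> 0")
  case True
  let ?P = "qt_pow m L (mu 1) K1" and ?G = "hpart (\<lambda>c. c 2) b g"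
  have Pc: "?P \<in> qt_carrier m" by (rule mu_pow_carrier) simp
  have gc: "g \<in> qt_carrier m" and gs1: "supp g \<subseteq> {x. fst x 1 = 0}" using g by (auto simp: deg0_def)
  have Gc: "?G \<in> qt_carrier m" using gc by (rule hpart_carrier)
  have Gs1: "supp ?G \<subseteq> {x. fst x 1 = 0}" using supp_hpart_subset[of "\<lambda>c. c 2" b g] gs1 by blast
  have GA: "?G \<in> Alow"
    by (rule nonneg_degrees_in_Alow[OF Gc]) (use Gs1 supp_hpart[of "\<lambda>c. c 2" b g] True in auto)
  have zs: "supp (qt_mult m L ?P ?G) \<subseteq> {x. fst x 1 = - int K1 + 0}"
    by (rule supp_mult_homogeneous[OF carrier_finite[OF Pc] carrier_finite[OF Gc] additive_coordinate supp_mu1_pow Gs1])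
  have "hpart (\<lambda>c. c 1) (- int K1) (qt_mult m L ?P ?G) = qt_mult m L ?P ?G"
    using hpart_homogeneous[OF zs] by simp
  moreover have "supp (qt_mult m L ?P ?G) \<subseteq> {x. fst x 1 \<ge> - int K1}" using zs by auto
  ultimately show ?thesis using Alow_mult[OF Alow_mu_pow GA] by auto
next
  case False
  hence "b < 0" by simp
  then obtain \<kappa> where "\<kappa> \<in> ZP m 2"
    "qt_mult m L (hpart (\<lambda>c. c 1) 0 (qt_pow m L (mu 2) (nat (- b)))) \<kappa> = hpart (\<lambda>c. c 2) b g"
    using degree0_mu2_pow_divides[OF yC2 g eqy] by blast
  thus ?thesis using mu_pows_mult_ZP_in_Alow by metis
qed

lemma lift_lowest_part:
  assumes y1: "y \<in> C1" and y2: "y \<in> C2"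
  shows "\<exists>z\<in>Alow. supp z \<subseteq> {x. fst x 1 \<ge> - int (Suc K)} \<and>
    hpart (\<lambda>c. c 1) (- int (Suc K)) z = hpart (\<lambda>c. c 1) (- int (Suc K)) y"
proof -
  define K1 where "K1 = Suc K"
  let ?P = "qt_pow m L (mu 1) K1"
  have Pc: "?P \<in> qt_carrier m" by (rule mu_pow_carrier) simp
  have "- int K1 < 0" by (simp add: K1_def)
  hence "\<exists>g\<in>deg0 m 1. hpart (\<lambda>c. c 1) (- int K1) y = qt_mult m L (qt_pow m L (mu 1) (nat (- (- int K1)))) g"
    using y1 unfolding lower_divisible_def by blast
  then obtain g where g: "g \<in> deg0 m 1" "hpart (\<lambda>c. c 1) (- int K1) y = qt_mult m L ?P g" by auto
  have gc: "g \<in> qt_carrier m" using g(1) by (simp add: deg0_def)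
  define Bg where "Bg = (\<lambda>x. fst x 2) ` supp g"
  have fB: "finite Bg" using carrier_finite[OF gc] by (simp add: Bg_def)
  obtain zf where zf: "\<And>b. zf b \<in> Alow \<and> supp (zf b) \<subseteq> {x. fst x 1 \<ge> - int K1} \<and>
     hpart (\<lambda>c. c 1) (- int K1) (zf b) = qt_mult m L ?P (hpart (\<lambda>c. c 2) b g)"
    using lift_lowest_component[OF y2 g(1) g(2)] by metis
  define z where "z = (\<lambda>x. \<Sum>b\<in>Bg. zf b x)"
  have "z \<in> Alow" unfolding z_def by (rule Alow_sum[OF fB]) (use zf in blast)
  moreover have "supp z \<subseteq> {x. fst x 1 \<ge> - int K1}" unfolding z_def by (rule supp_sum_subset) (use zf in blast)
  moreover have "hpart (\<lambda>c. c 1) (- int K1) z = hpart (\<lambda>c. c 1) (- int K1) y"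
  proof -
    have "hpart (\<lambda>c. c 1) (- int K1) z = (\<lambda>x. \<Sum>b\<in>Bg. qt_mult m L ?P (hpart (\<lambda>c. c 2) b g) x)"
      using zf by (simp add: z_def hpart_sum)
    also have "\<dots> = qt_mult m L ?P (\<lambda>x. \<Sum>b\<in>Bg. hpart (\<lambda>c. c 2) b g x)"
      by (rule mult_sum_right[OF carrier_finite[OF Pc] fB, symmetric])
        (use finite_subset[OF supp_hpart_subset carrier_finite[OF gc]] in auto)
    also have "(\<lambda>x. \<Sum>b\<in>Bg. hpart (\<lambda>c. c 2) b g x) = g"
      unfolding Bg_def by (rule sum_hparts[OF carrier_finite[OF gc], symmetric])
    finally show ?thesis using g(2) by simp
  qed
  ultimately show ?thesis unfolding K1_def by blast
qed

lemma bounded_below_step: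
  assumes IH: "\<And>y. y \<in> C1 \<Longrightarrow> y \<in> C2 \<Longrightarrow> supp y \<subseteq> {x. fst x 1 \<ge> - int K} \<Longrightarrow> y \<in> Alow"
    and y1: "y \<in> C1" and y2: "y \<in> C2" and ys: "supp y \<subseteq> {x. fst x 1 \<ge> - int (Suc K)}"
  shows "y \<in> Alow"
proof -
  obtain z where zA: "z \<in> Alow" and zs: "supp z \<subseteq> {x. fst x 1 \<ge> - int (Suc K)}"
    and zlow: "hpart (\<lambda>c. c 1) (- int (Suc K)) z = hpart (\<lambda>c. c 1) (- int (Suc K)) y"
    using lift_lowest_part[OF y1 y2] by blast
  define y' where "y' = (\<lambda>x. y x - z x)"
  have zC: "z \<in> C1" "z \<in> C2" using Alow_subset_C zA by auto
  have y'1: "y' \<in> C1" unfolding y'_def by (rule lower_divisible_diff[OF y1 zC(1)]) simp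
  have y'2: "y' \<in> C2" unfolding y'_def by (rule lower_divisible_diff[OF y2 zC(2)]) simp
  have y's: "supp y' \<subseteq> {x. fst x 1 \<ge> - int K}"
  proof
    fix x assume x: "x \<in> supp y'"
    have "fst x 1 \<ge> - int (Suc K)" using supp_diff_subset[OF ys zs] x by (auto simp: y'_def)
    moreover have "fst x 1 \<noteq> - int (Suc K)"
    proof
      assume e: "fst x 1 = - int (Suc K)"
      hence "z x = y x" using fun_cong[OF zlow, of x] by (simp add: hpart_def)
      thus False using x by (simp add: supp_def y'_def)
    qed
    ultimately show "x \<in> {x. fst x 1 \<ge> - int K}" by auto
  qed
  have "(\<lambda>x. y' x + z x) \<in> Alow" using IH[OF y'1 y'2 y's] zA by (rule Alow_add)
  thus ?thesis by (simp add: y'_def)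
qed

lemma bounded_below_in_Alow: "y \<in> C1 \<Longrightarrow> y \<in> C2 \<Longrightarrow> supp y \<subseteq> {x. fst x 1 \<ge> - int K} \<Longrightarrow> y \<in> Alow"
proof (induction K arbitrary: y)
  case 0 thus ?case using nonneg_degree1_in_Alow by simp
next
  case (Suc K) thus ?case using bounded_below_step by blast
qed

lemma Alow_eq_U1_inter_U2: "Alow = U1 \<inter> U2"
proof
  show "Alow \<subseteq> U1 \<inter> U2" using Alow_subset_U1 Alow_subset_U2 by blast
  show "U1 \<inter> U2 \<subseteq> Alow"
  proof
    fix y assume "y \<in> U1 \<inter> U2"
    hence y1: "y \<in> C1" and y2: "y \<in> C2" using U1_subset_C1 U2_subset_C2 by auto
    have yc: "y \<in> qt_carrier m" using y1 by (simp add: lower_divisible_def)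
    let ?S = "insert 0 ((\<lambda>x. - fst x 1) ` supp y)"
    have fS: "finite ?S" using carrier_finite[OF yc] by simp
    define K where "K = nat (Max ?S)"
    have "supp y \<subseteq> {x. fst x 1 \<ge> - int K}"
    proof
      fix x assume "x \<in> supp y"
      hence "- fst x 1 \<in> ?S" by blast
      hence "- fst x 1 \<le> Max ?S" using Min_le fS by (simp add: Max_ge)
      thus "x \<in> {x. fst x 1 \<ge> - int K}" by (simp add: K_def)
    qed
    thus "y \<in> Alow" using bounded_below_in_Alow y1 y2 by blast
  qed
qed

end

theorem lemma4p5:
  fixes m :: nat and L B :: "nat \<Rightarrow> nat \<Rightarrow> int" and d :: "nat \<Rightarrow> int"
    and h :: "nat \<Rightarrow> nat \<Rightarrow> qt"
  assumes "m \<ge> 2"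
    and "compatible_pair m 2 L B"
    and "seed_data m 2 B d h"
    and "coprime_seed m 2 L B d h"
  shows "ZP_adj m 2 L {Xv (evec 1), mut_var m L B d h 1, Xv (evec 2), mut_var m L B d h 2}
       = ZP_adj m 2 L {Xv (evec 1), mut_var m L B d h 1, Xv (evec 2), Xv (\<lambda>i. - evec 2 i)}
         \<inter> ZP_adj m 2 L {Xv (evec 1), Xv (\<lambda>i. - evec 1 i), Xv (evec 2), mut_var m L B d h 2}"
proof -
  interpret rank2_seed m L B d h by unfold_locales (fact assms)+
  show ?thesis by (rule Alow_eq_U1_inter_U2)
qed

end
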